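(* Let $A:\mathbb{R}^n\to\mathbb{R}^n$ be a linear operator that is generalized strictly sign-regular (GSSR) with respect to a totally positive structure $\{K_1,\ldots,K_n\}$. Then for every $j=1,\ldots,n$ the interior of $T(K_j)$ is nonempty and $$A\big(T(K_j)\setminus\{0\}\big)\subseteq\operatorname{int}(T(K_j)).$$
   Context: A proper cone in a finite-dimensional real space is a closed convex cone that is pointed ($K\cap(-K)=\{0\}$) and solid ($\operatorname{int}K\ne\emptyset$). $\wedge^j\mathbb{R}^n$ is the $j$th exterior power of $\mathbb{R}^n$, and for a linear operator $A$ on $\mathbb{R}^n$, $\wedge^jA$ is the operator on $\wedge^j\mathbb{R}^n$ with $(\wedge^jA)(x_1\wedge\cdots\wedge x_j)=Ax_1\wedge\cdots\wedge Ax_j$ ($\wedge^1A=A$). A linear operator $B$ is $K$-positive if $B(K\setminus\{0\})\subseteq\operatorname{int}(K)$. A totally positive structure on $\mathbb{R}^n$ is a family $\{K_1,\ldots,K_n\}$ with $K_j\subset\wedge^j\mathbb{R}^n$ a proper cone. $A$ is GSSR with respect to it if there are $\epsilon_1,\ldots,\epsilon_n\in\{1,-1\}$ such that $\epsilon_j\wedge^jA$ is $K_j$-positive for every $j=1,\ldots,n$. Define $T(K_1)=K_1\cup(-K_1)$, and for $j\ge2$ let $T(K_j)$ be the closure of the set of all $x_1\in\mathbb{R}^n$ for which there exist $x_2,\ldots,x_j\in\mathbb{R}^n$ with $x_1\wedge x_2\wedge\cdots\wedge x_j\in\operatorname{int}(K_j)\cup\operatorname{int}(-K_j)$. *)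

theory Defs
  imports "HOL-Analysis.Analysis"
begin

text \<open>
  The ambient space is R^n = real^'n with n = CARD('n);
  the index type is linearly ordered so that j-subsets I can be listed increasingly.
  The exterior power \<wedge>^j R^n is modelled as the subspace
  ext_space j of real^('n set) consisting of vectors supported on the j-subsets of 'n,
  the coordinate at I being the coefficient of the basis vector e_{i1} \<wedge> ... \<wedge> e_{ij}
  (i1 < ... < ij the elements of I).
\<close>

definition ext_space :: "nat \<Rightarrow> (real^('n::{finite,linorder} set)) set" where
  "ext_space j = {v. \<forall>I. card I \<noteq> j \<longrightarrow> v $ I = 0}"

text \<open>Coordinates of x_1 \<wedge> ... \<wedge> x_j: the j\<times>j minors (Leibniz formula).\<close>
definition wedge :: "(real^'n::{finite,linorder}) list \<Rightarrow> real^('n set)" where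
  "wedge xs = (\<chi> I. if card I = length xs then
      (let rows = sorted_list_of_set I in
        \<Sum>p | p permutes {..<length xs}.
           of_int (sign p) * (\<Prod>i<length xs. (xs ! i) $ (rows ! p i)))
     else 0)"

text \<open>The compound operator \<wedge>^j A, given by the j-th compound matrix of A:
  its (I,J) entry is the I-coordinate of A e_{J1} \<wedge> ... \<wedge> A e_{Jj}.\<close>
definition compound :: "nat \<Rightarrow> ((real,'n::{finite,linorder}) vec, 'n) vec \<Rightarrow> real^('n set) \<Rightarrow> real^('n set)" where
  "compound j A v = (\<chi> I. if card I = j then
      (\<Sum>J\<in>{J. card J = j}. wedge (map (\<lambda>k. column k A) (sorted_list_of_set J)) $ I * v $ J)
     else 0)"

definition ext_interior :: "nat \<Rightarrow> (real^('n::{finite,linorder} set)) set \<Rightarrow> (real^('n set)) set" where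
  "ext_interior j S = (top_of_set (ext_space j)) interior_of S"

definition proper_cone :: "nat \<Rightarrow> (real^('n::{finite,linorder} set)) set \<Rightarrow> bool" where
  "proper_cone j K \<longleftrightarrow> K \<subseteq> ext_space j \<and> closed K \<and> convex K \<and> cone K
     \<and> K \<inter> uminus ` K = {0} \<and> ext_interior j K \<noteq> {}"

definition K_positive :: "nat \<Rightarrow> (real^('n::{finite,linorder} set)) set \<Rightarrow> (real^('n set) \<Rightarrow> real^('n set)) \<Rightarrow> bool" where
  "K_positive j K B \<longleftrightarrow> B ` (K - {0}) \<subseteq> ext_interior j K"

definition totally_positive_structure :: "(nat \<Rightarrow> (real^('n::{finite,linorder} set)) set) \<Rightarrow> bool" where
  "totally_positive_structure K \<longleftrightarrow> (\<forall>j\<in>{1..CARD('n)}. proper_cone j (K j))"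

definition GSSR :: "((real,'n::{finite,linorder}) vec, 'n) vec \<Rightarrow> (nat \<Rightarrow> (real^('n set)) set) \<Rightarrow> bool" where
  "GSSR A K \<longleftrightarrow> (\<exists>\<epsilon>::nat \<Rightarrow> real. \<forall>j\<in>{1..CARD('n)}. \<epsilon> j \<in> {1, -1} \<and>
      K_positive j (K j) (\<lambda>v. \<epsilon> j *\<^sub>R compound j A v))"

text \<open>T(K_j) \<subseteq> R^n; for j = 1 we use the identification of \<wedge>^1 R^n with R^n via x \<mapsto> wedge [x].\<close>
definition T_cone :: "(nat \<Rightarrow> (real^('n::{finite,linorder} set)) set) \<Rightarrow> nat \<Rightarrow> (real,'n) vec set" where
  "T_cone K j = (if j = 1 then {x. wedge [x] \<in> K 1 \<union> uminus ` K 1}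
     else closure {x. \<exists>xs. length xs = j - 1 \<and>
        wedge (x # xs) \<in> ext_interior j (K j) \<union> ext_interior j (uminus ` K j)})"

end

theory Submission
  imports Defs
begin

text \<open>
  Fix j and let M = \<epsilon>_j \<and>^j A, which maps K_j - {0} into the interior of K_j.  By Brouwer's
  theorem M has an eigenvector u in the interior of K_j, and squeezing the normalised iterates
  M^m w / \<rho>^m between their best lower and upper multiples of u shows that they converge to
  multiples of u.  Since the products e_J of coordinate vectors span \<and>^j \<real>^n, some iterate
  M^m e_J = \<epsilon>_j^m (A^m e_i1 \<and> ... \<and> A^m e_ij) lies in the interior of K_j or of -K_j.  So the
  open set T_core of those x with x \<and> y_2 \<and> ... \<and> y_j in one of these interiors for some y,
  whose closure is T(K_j), is nonempty.  Conversely, a nonzero x \<in> T(K_j) is a limit of points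
  of T_core whose witnesses y can be taken orthonormal and orthogonal to x; a limit of these
  gives x \<and> y \<in> (K_j \<union> -K_j) - {0}, and A x \<and> A y = \<epsilon>_j M (x \<and> y) puts A x into
  T_core \<subseteq> int T(K_j).
\<close>

section \<open>Interiors relative to a subspace\<close>

definition interior_in :: "'a::topological_space set \<Rightarrow> 'a set \<Rightarrow> 'a set" where
  "interior_in E S = top_of_set E interior_of S"

lemma interior_in_iff:
  "x \<in> interior_in E S \<longleftrightarrow> x \<in> E \<and> (\<exists>e>0. \<forall>y\<in>E. dist y x < e \<longrightarrow> y \<in> S)"
proof
  assume "x \<in> interior_in E S"
  then obtain T where T: "openin (top_of_set E) T" "x \<in> T" "T \<subseteq> S"
    unfolding interior_in_def interior_of_def by auto
  then show "x \<in> E \<and> (\<exists>e>0. \<forall>y\<in>E. dist y x < e \<longrightarrow> y \<in> S)"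
    unfolding openin_euclidean_subtopology_iff by blast
next
  assume "x \<in> E \<and> (\<exists>e>0. \<forall>y\<in>E. dist y x < e \<longrightarrow> y \<in> S)"
  then obtain e where x: "x \<in> E" and e: "e > 0" "\<forall>y\<in>E. dist y x < e \<longrightarrow> y \<in> S" by blast
  have "openin (top_of_set E) (E \<inter> ball x e)" by (rule openin_open_Int) simp
  moreover have "x \<in> E \<inter> ball x e" "E \<inter> ball x e \<subseteq> S" using x e by (auto simp: dist_commute)
  ultimately show "x \<in> interior_in E S" unfolding interior_in_def interior_of_def by blast
qed

lemma interior_in_subset: "interior_in E S \<subseteq> S"
  unfolding interior_in_def by (rule interior_of_subset)

lemma interior_in_ball:
  assumes "x \<in> interior_in E S"
  obtains e where "e > 0" "\<And>y. y \<in> E \<Longrightarrow> dist y x < e \<Longrightarrow> y \<in> interior_in E S"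
proof -
  have "openin (top_of_set E) (interior_in E S)"
    unfolding interior_in_def by (rule openin_interior_of)
  then show ?thesis
    using assms that unfolding openin_euclidean_subtopology_iff by blast
qed

lemma eventually_in_of_tendsto_interior_in:
  fixes y :: "nat \<Rightarrow> 'a::metric_space"
  assumes "\<And>m. y m \<in> E" "y \<longlonglongrightarrow> y0" "y0 \<in> interior_in E S"
  shows "\<forall>\<^sub>F m in sequentially. y m \<in> S"
proof -
  obtain e where e: "e > 0" "\<forall>y\<in>E. dist y y0 < e \<longrightarrow> y \<in> S"
    using assms(3) interior_in_iff by blast
  have "\<forall>\<^sub>F m in sequentially. dist (y m) y0 < e" using assms(2) e(1) by (rule tendstoD)
  then show ?thesis by eventually_elim (use e assms(1) in blast)
qed

lemma interior_in_scaleR_image: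
  fixes E :: "'a::real_normed_vector set"
  assumes "subspace E" "S \<subseteq> E" "c \<noteq> 0"
  shows "interior_in E ((*\<^sub>R) c ` S) = (*\<^sub>R) c ` interior_in E S"
proof -
  have "homeomorphic_maps (top_of_set E) (top_of_set E) ((*\<^sub>R) c) ((*\<^sub>R) (inverse c))"
    using assms by (auto simp: homeomorphic_maps_def subspace_scale continuous_on_scaleR)
  then show ?thesis
    unfolding interior_in_def using assms(2)
    by (intro homeomorphic_map_interior_of) (auto simp: homeomorphic_map_maps)
qed

lemma interior_in_uminus:
  fixes E :: "'a::real_normed_vector set"
  assumes "subspace E" "S \<subseteq> E"
  shows "interior_in E (uminus ` S) = uminus ` interior_in E S"
  using interior_in_scaleR_image[OF assms, of "-1"] by (simp add: image_image)

lemma interior_in_scaleR_cone: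
  fixes E :: "'a::real_normed_vector set"
  assumes "subspace E" "cone K" "K \<subseteq> E" "x \<in> interior_in E K" "c > 0"
  shows "c *\<^sub>R x \<in> interior_in E K"
proof -
  have "(*\<^sub>R) c ` K = K"
    using assms(2,5) cone_iff[of K] by (cases "K = {}") auto
  then show ?thesis
    using interior_in_scaleR_image[OF assms(1,3), of c] assms(4,5) by auto
qed

lemma interior_in_absorbs:
  fixes E :: "'a::real_normed_vector set"
  assumes "subspace E" "cone K" "u \<in> interior_in E K" "w \<in> E"
  obtains t where "t > 0" "w + t *\<^sub>R u \<in> K"
proof -
  obtain e where u: "u \<in> E" and e: "e > 0" "\<forall>y\<in>E. dist y u < e \<longrightarrow> y \<in> K"
    using assms interior_in_iff by blast
  define t where "t = 2 * (norm w + 1) / e"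
  have t: "t > 0" unfolding t_def using e by (simp add: add_nonneg_pos)
  have "u + (1/t) *\<^sub>R w \<in> E" using assms u subspace_add subspace_scale by blast
  moreover have "dist (u + (1/t) *\<^sub>R w) u < e"
  proof -
    have "dist (u + (1/t) *\<^sub>R w) u = norm w * e / (2 * (norm w + 1))"
      using t e by (simp add: dist_norm t_def)
    also have "\<dots> < e"
    proof -
      have "norm w * e < e * (2 * (norm w + 1))"
        using e norm_ge_zero[of w] by (simp add: algebra_simps add_nonneg_pos)
      moreover have "0 < 2 * (norm w + 1)" by (smt (verit) norm_ge_zero)
      ultimately show ?thesis by (simp add: divide_less_eq)
    qed
    finally show ?thesis .
  qed
  ultimately have "u + (1/t) *\<^sub>R w \<in> K" using e by blast
  then have "t *\<^sub>R (u + (1/t) *\<^sub>R w) \<in> K" using assms(2) t by (simp add: mem_cone)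
  then show ?thesis using t that by (simp add: algebra_simps)
qed

lemma zero_notin_interior_in:
  fixes E :: "'a::real_normed_vector set"
  assumes "subspace E" "E \<noteq> {0}" "cone K" "K \<inter> uminus ` K = {0}"
  shows "0 \<notin> interior_in E K"
proof
  assume "0 \<in> interior_in E K"
  then obtain e where e: "e > 0" "\<forall>y\<in>E. dist y 0 < e \<longrightarrow> y \<in> K"
    using interior_in_iff by blast
  obtain v where v: "v \<in> E" "v \<noteq> 0" using assms(1,2) subspace_0 by blast
  define y where "y = (e / (2 * norm v)) *\<^sub>R v"
  have ny: "norm y = e / 2" using v e by (simp add: y_def)
  have "y \<in> E" "-y \<in> E" using assms(1) v subspace_scale subspace_neg unfolding y_def by blast+
  then have "y \<in> K" "-y \<in> K" using e ny by auto
  then have "y \<in> K \<inter> uminus ` K" by (metis IntI image_eqI minus_minus)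
  then show False using assms(4) ny e by auto
qed

definition signed_interior_in :: "'a::real_normed_vector set \<Rightarrow> 'a set \<Rightarrow> 'a set" where
  "signed_interior_in E K = interior_in E K \<union> interior_in E (uminus ` K)"

lemma signed_interior_in_scaleR:
  fixes E :: "'a::real_normed_vector set"
  assumes "subspace E" "cone K" "K \<subseteq> E" "w \<in> signed_interior_in E K" "c \<noteq> 0"
  shows "c *\<^sub>R w \<in> signed_interior_in E K"
proof -
  have "\<exists>s. s \<in> {1, -1} \<and> s *\<^sub>R w \<in> interior_in E K"
    using assms(4) interior_in_uminus[OF assms(1,3)]
    unfolding signed_interior_in_def by (force intro: exI[of _ 1] exI[of _ "-1"])
  then obtain s where s: "s \<in> {1, -1}" "s *\<^sub>R w \<in> interior_in E K" by blast
  have "\<bar>c\<bar> *\<^sub>R (s *\<^sub>R w) \<in> interior_in E K"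
    using interior_in_scaleR_cone[OF assms(1-3) s(2)] assms(5) by simp
  moreover have "c *\<^sub>R w = \<bar>c\<bar> *\<^sub>R (s *\<^sub>R w) \<or> c *\<^sub>R w = - (\<bar>c\<bar> *\<^sub>R (s *\<^sub>R w))"
    using s(1) by (cases "c \<ge> 0") auto
  ultimately show ?thesis
    using interior_in_uminus[OF assms(1,3)] unfolding signed_interior_in_def by auto
qed

lemma signed_interior_in_ball:
  assumes "x \<in> signed_interior_in E K"
  obtains e where "e > 0" "\<And>y. y \<in> E \<Longrightarrow> dist y x < e \<Longrightarrow> y \<in> signed_interior_in E K"
  using assms interior_in_ball unfolding signed_interior_in_def by (metis Un_iff)

lemma convex_cone_sum:
  assumes "convex_cone K" "\<And>x. x \<in> S \<Longrightarrow> f x \<in> K"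
  shows "sum f S \<in> K"
  using assms(2)
  by (induction S rule: infinite_finite_induct)
    (auto intro: convex_cone_add[OF assms(1)] convex_cone_contains_0[OF assms(1)])

section \<open>Perron's theorem for cone-positive maps\<close>

locale proper_cone_in =
  fixes E :: "'a::euclidean_space set" and K :: "'a set"
  assumes E_subspace: "subspace E" and E_nontrivial: "E \<noteq> {0}"
    and K_subset: "K \<subseteq> E" and K_closed: "closed K" and K_convex: "convex K" and K_cone: "cone K"
    and K_pointed: "K \<inter> uminus ` K = {0}" and K_interior: "interior_in E K \<noteq> {}"
begin

lemma K_convex_cone: "convex_cone K"
  using K_convex K_cone K_interior interior_in_subset
  unfolding convex_cone_def conic_def cone_def by blast

lemma zero_notin_interior: "0 \<notin> interior_in E K"
  using zero_notin_interior_in E_subspace E_nontrivial K_cone K_pointed by blast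

lemma interior_subset_nonzero: "interior_in E K \<subseteq> K - {0}"
  using interior_in_subset zero_notin_interior by blast

lemma K_eq_0_if_uminus: "v \<in> K \<Longrightarrow> -v \<in> K \<Longrightarrow> v = 0"
proof -
  assume "v \<in> K" "-v \<in> K"
  then have "v \<in> K \<inter> uminus ` K" by (metis IntI image_eqI minus_minus)
  then show "v = 0" using K_pointed by blast
qed

text \<open>The convex hull of the compact set K \<inter> sphere 0 1 misses 0, so it can be separated
  from 0 by a hyperplane.\<close>

lemma exists_coercive_functional:
  obtains a \<gamma> where "\<gamma> > 0" "\<And>v. v \<in> K \<Longrightarrow> \<gamma> * norm v \<le> inner a v"
proof -
  define C where "C = convex hull (K \<inter> sphere 0 1)"
  have "compact C"
    unfolding C_def by (intro compact_convex_hull closed_Int_compact K_closed compact_sphere)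
  have "0 \<notin> C"
  proof
    assume "0 \<in> C"
    then obtain S c where S: "finite S" "S \<subseteq> K \<inter> sphere 0 1" "\<forall>x\<in>S. 0 \<le> c x" "sum c S = 1"
      "(\<Sum>v\<in>S. c v *\<^sub>R v) = 0"
      unfolding C_def convex_hull_explicit by blast
    obtain t where t: "t \<in> S" "c t > 0"
    proof (rule ccontr)
      assume "\<not> thesis"
      then have "\<forall>x\<in>S. c x = 0" using S(3) that by force
      then show False using S(4) by simp
    qed
    have "(\<Sum>v\<in>S - {t}. c v *\<^sub>R v) \<in> K"
      using S K_convex_cone by (intro convex_cone_sum) (auto intro: convex_cone_scaleR)
    moreover have "c t *\<^sub>R t = - (\<Sum>v\<in>S - {t}. c v *\<^sub>R v)"
      using S(1,5) t(1) by (simp add: sum.remove eq_neg_iff_add_eq_0)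
    moreover have "c t *\<^sub>R t \<in> K" using S t K_convex_cone by (auto intro: convex_cone_scaleR)
    ultimately have "c t *\<^sub>R t = 0" using K_eq_0_if_uminus[of "c t *\<^sub>R t"] by simp
    then show False using S(2) t by auto
  qed
  then obtain a b where ab: "0 < b" "\<And>x. x \<in> C \<Longrightarrow> inner a x > b"
    using separating_hyperplane_closed_0[of C] \<open>compact C\<close> compact_imp_closed
    unfolding C_def by (metis convex_convex_hull)
  have "b * norm v \<le> inner a v" if v: "v \<in> K" for v
  proof (cases "v = 0")
    case False
    have "(1 / norm v) *\<^sub>R v \<in> C"
      unfolding C_def using v False K_convex_cone
      by (intro hull_inc) (auto intro: convex_cone_scaleR)
    then have "inner a ((1 / norm v) *\<^sub>R v) > b" using ab by blast
    then have "inner a v / norm v > b" by simp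
    then show ?thesis using False by (simp add: pos_less_divide_eq mult.commute)
  qed simp
  then show ?thesis using that ab by blast
qed

lemma exists_compact_base:
  obtains a where "\<And>v. v \<in> K \<Longrightarrow> v \<noteq> 0 \<Longrightarrow> inner a v > 0"
    "compact (K \<inter> {v. inner a v = 1})" "convex (K \<inter> {v. inner a v = 1})"
    "K \<inter> {v. inner a v = 1} \<noteq> {}"
proof -
  obtain a \<gamma> where \<gamma>: "\<gamma> > 0" "\<And>v. v \<in> K \<Longrightarrow> \<gamma> * norm v \<le> inner a v"
    using exists_coercive_functional by blast
  have a_pos: "inner a v > 0" if "v \<in> K" "v \<noteq> 0" for v
    using \<gamma>(1) \<gamma>(2)[OF that(1)] that(2) by (smt (verit) mult_pos_pos zero_less_norm_iff)
  have "norm v \<le> 1 / \<gamma>" if "v \<in> K \<inter> {v. inner a v = 1}" for v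
  proof -
    have "\<gamma> * norm v \<le> 1" using \<gamma>(2) that by force
    then show ?thesis using \<gamma>(1) by (simp add: field_simps)
  qed
  then have "bounded (K \<inter> {v. inner a v = 1})" unfolding bounded_iff by blast
  then have "compact (K \<inter> {v. inner a v = 1})"
    by (simp add: compact_eq_bounded_closed closed_Int closed_hyperplane K_closed)
  moreover have "convex (K \<inter> {v. inner a v = 1})" by (intro convex_Int K_convex convex_hyperplane)
  moreover obtain w where "w \<in> interior_in E K" using K_interior by blast
  then have w: "w \<in> K" "inner a w > 0" using interior_subset_nonzero a_pos by auto
  then have "(1 / inner a w) *\<^sub>R w \<in> K \<inter> {v. inner a v = 1}"
    using K_convex_cone by (auto intro!: convex_cone_scaleR)
  ultimately show ?thesis using that a_pos by blast
qed

lemma zero_notin_signed_interior: "0 \<notin> signed_interior_in E K"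
  using zero_notin_interior interior_in_uminus[OF E_subspace K_subset]
  unfolding signed_interior_in_def by force

end

locale cone_positive_map = proper_cone_in +
  fixes M :: "'a::euclidean_space \<Rightarrow> 'a"
  assumes M_linear: "linear M" and M_space: "M ` E \<subseteq> E"
    and M_positive: "M ` (K - {0}) \<subseteq> interior_in E K"
begin

lemma M_K: "v \<in> K \<Longrightarrow> M v \<in> K"
  using M_positive interior_in_subset convex_cone_contains_0[OF K_convex_cone] linear_0[OF M_linear]
  by (cases "v = 0") auto

text \<open>Perron's theorem for K: Brouwer's fixed point theorem applied to the normalised map
  v \<mapsto> M v / \<langle>a, M v\<rangle> on the compact convex base of K.\<close>

lemma exists_interior_eigenvector:
  obtains u \<rho> where "u \<in> interior_in E K" "\<rho> > 0" "M u = \<rho> *\<^sub>R u"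
proof -
  obtain a where a_pos: "\<And>v. v \<in> K \<Longrightarrow> v \<noteq> 0 \<Longrightarrow> inner a v > 0"
    and base: "compact (K \<inter> {v. inner a v = 1})" "convex (K \<inter> {v. inner a v = 1})"
      "K \<inter> {v. inner a v = 1} \<noteq> {}"
    using exists_compact_base by blast
  define B where "B = K \<inter> {v. inner a v = 1}"
  have MB: "M v \<in> interior_in E K" "M v \<in> K" "inner a (M v) > 0" if "v \<in> B" for v
  proof -
    have "v \<in> K - {0}" using that unfolding B_def by auto
    then show "M v \<in> interior_in E K" using M_positive by blast
    then show "M v \<in> K" "inner a (M v) > 0" using interior_subset_nonzero a_pos by auto
  qed
  define f where "f v = (1 / inner a (M v)) *\<^sub>R M v" for v
  have "continuous_on B f"
    unfolding f_def using MB(3) M_linear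
    by (intro continuous_intros linear_continuous_on linear_conv_bounded_linear[THEN iffD1])
      (auto simp: linear_conv_bounded_linear dest: MB(3))
  moreover have "f \<in> B \<rightarrow> B"
  proof
    fix v assume "v \<in> B"
    then show "f v \<in> B"
      using MB[of v] K_convex_cone unfolding f_def B_def by (auto intro!: convex_cone_scaleR)
  qed
  ultimately obtain u where u: "u \<in> B" "f u = u"
    using brouwer[of B f] base unfolding B_def by blast
  define \<rho> where "\<rho> = inner a (M u)"
  have \<rho>: "\<rho> > 0" using MB(3)[OF u(1)] unfolding \<rho>_def .
  have Mu: "M u = \<rho> *\<^sub>R u"
    using u(2) \<rho> unfolding f_def \<rho>_def by (metis divide_inverse_commute right_inverse
      scaleR_one scaleR_scaleR less_irrefl)
  have "(1 / \<rho>) *\<^sub>R M u \<in> interior_in E K"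
    using interior_in_scaleR_cone[OF E_subspace K_cone K_subset MB(1)[OF u(1)]] \<rho> by simp
  then show ?thesis using that \<rho> Mu by simp
qed

end

locale cone_positive_map_eigenvector = cone_positive_map +
  fixes u :: "'a::euclidean_space" and \<rho> :: real
  assumes u_interior: "u \<in> interior_in E K" and \<rho>_pos: "\<rho> > 0" and M_u: "M u = \<rho> *\<^sub>R u"
begin

definition N :: "'a \<Rightarrow> 'a" where
  "N v = (1 / \<rho>) *\<^sub>R M v"

lemma N_linear: "linear N"
  unfolding N_def[abs_def] using M_linear by (rule linear_compose_scale_right)

lemma N_pow_linear: "linear (N ^^ m)"
  by (induction m)
    (auto simp: linear_id[unfolded id_def] intro: linear_compose[OF _ N_linear, unfolded o_def])

lemma u_K: "u \<in> K" "u \<noteq> 0" "u \<in> E"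
  using u_interior interior_subset_nonzero K_subset by auto

lemma N_u: "N u = u"
  using M_u \<rho>_pos by (simp add: N_def)

lemma N_pow_u: "(N ^^ m) u = u"
  by (induction m) (simp_all add: N_u)

lemma N_space: "v \<in> E \<Longrightarrow> N v \<in> E"
  using M_space E_subspace subspace_scale unfolding N_def by blast

lemma N_pow_space: "v \<in> E \<Longrightarrow> (N ^^ m) v \<in> E"
  by (induction m) (simp_all add: N_space)

lemma N_K: "v \<in> K \<Longrightarrow> N v \<in> K"
  using M_K \<rho>_pos K_convex_cone unfolding N_def by (simp add: convex_cone_scaleR)

lemma N_positive: "v \<in> K \<Longrightarrow> v \<noteq> 0 \<Longrightarrow> N v \<in> interior_in E K"
  using M_positive interior_in_scaleR_cone[OF E_subspace K_cone K_subset] \<rho>_pos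
  unfolding N_def by auto

lemma N_diff_u: "N (v - c *\<^sub>R u) = N v - c *\<^sub>R u"
  using linear_diff[OF N_linear] linear_cmul[OF N_linear] N_u by simp

lemma u_multiples_le:
  assumes "z - \<alpha> *\<^sub>R u \<in> K" "\<beta> *\<^sub>R u - z \<in> K"
  shows "\<alpha> \<le> \<beta>"
proof (rule ccontr)
  assume "\<not> \<alpha> \<le> \<beta>"
  have "(\<beta> - \<alpha>) *\<^sub>R u \<in> K"
    using convex_cone_add[OF K_convex_cone assms(2,1)] by (simp add: algebra_simps)
  moreover have "- ((\<beta> - \<alpha>) *\<^sub>R u) \<in> K"
    using convex_cone_scaleR[OF K_convex_cone _ u_K(1), of "\<alpha> - \<beta>"] \<open>\<not> \<alpha> \<le> \<beta>\<close>
    by (simp add: algebra_simps)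
  ultimately have "(\<beta> - \<alpha>) *\<^sub>R u = 0" by (rule K_eq_0_if_uminus)
  then show False using \<open>\<not> \<alpha> \<le> \<beta>\<close> u_K(2) by simp
qed

lemma norm_bounded_by_u:
  obtains C where "C > 0" "\<And>v s. v \<in> K \<Longrightarrow> s *\<^sub>R u - v \<in> K \<Longrightarrow> norm v \<le> C * s"
proof -
  obtain a \<gamma> where \<gamma>: "\<gamma> > 0" "\<And>v. v \<in> K \<Longrightarrow> \<gamma> * norm v \<le> inner a v"
    using exists_coercive_functional by blast
  have "norm v \<le> (inner a u / \<gamma>) * s" if "v \<in> K" "s *\<^sub>R u - v \<in> K" for v s
  proof -
    have "\<gamma> * norm v \<le> inner a v" "0 \<le> inner a (s *\<^sub>R u - v)"
      using \<gamma> that by (auto intro: order_trans[OF _ \<gamma>(2)])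
    then have "\<gamma> * norm v \<le> s * inner a u" by (simp add: inner_diff_right)
    then show ?thesis using \<gamma>(1) by (simp add: field_simps)
  qed
  moreover have "inner a u > 0"
    using \<gamma>(1) \<gamma>(2)[OF u_K(1)] u_K(2) by (smt (verit) mult_pos_pos zero_less_norm_iff)
  ultimately show ?thesis using that \<gamma>(1) by (metis divide_pos_pos)
qed

lemma N_minus_u_interior:
  assumes "v \<in> K" "v \<noteq> 0"
  obtains \<delta> where "\<delta> > 0" "N v - \<delta> *\<^sub>R u \<in> interior_in E K"
proof -
  obtain e where e: "e > 0" "\<And>y. y \<in> E \<Longrightarrow> dist y (N v) < e \<Longrightarrow> y \<in> interior_in E K"
    using interior_in_ball[OF N_positive[OF assms]] by blast
  define \<delta> where "\<delta> = e / (2 * norm u)"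
  have "\<delta> > 0" using e u_K by (simp add: \<delta>_def)
  moreover have "N v - \<delta> *\<^sub>R u \<in> E"
    using N_space assms K_subset u_K E_subspace subspace_diff subspace_scale by blast
  moreover have "dist (N v - \<delta> *\<^sub>R u) (N v) < e"
    using e u_K by (simp add: dist_norm \<delta>_def)
  ultimately show ?thesis using e that by blast
qed

text \<open>lower_coeff v and upper_coeff v are the best constants with
  lower_coeff v \<cdot> u \<le> v \<le> upper_coeff v \<cdot> u in the order defined by K.\<close>

definition lower_coeff :: "'a \<Rightarrow> real" where
  "lower_coeff v = Sup {\<alpha>. v - \<alpha> *\<^sub>R u \<in> K}"

lemma lower_coeff_below_greatest:
  assumes "v \<in> E"
  shows "v - lower_coeff v *\<^sub>R u \<in> K" and "v - \<alpha> *\<^sub>R u \<in> K \<Longrightarrow> \<alpha> \<le> lower_coeff v"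
proof -
  define S where "S = {\<alpha>. v - \<alpha> *\<^sub>R u \<in> K}"
  obtain t where "v + t *\<^sub>R u \<in> K"
    using interior_in_absorbs[OF E_subspace K_cone u_interior assms] .
  then have "-t \<in> S" unfolding S_def by simp
  have "- v \<in> E" using assms E_subspace subspace_neg by blast
  then obtain t' where "- v + t' *\<^sub>R u \<in> K"
    using interior_in_absorbs[OF E_subspace K_cone u_interior] by blast
  then have bdd: "bdd_above S"
    unfolding S_def by (intro bdd_aboveI[of _ t']) (auto intro: u_multiples_le)
  have "S = (\<lambda>\<alpha>. v - \<alpha> *\<^sub>R u) -` K" unfolding S_def by auto
  moreover have "continuous_on UNIV (\<lambda>\<alpha>. v - \<alpha> *\<^sub>R u)" by (intro continuous_intros)
  ultimately have "closed S" using closed_vimage K_closed by metis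
  then have "Sup S \<in> S" using closed_contains_Sup[OF _ bdd] \<open>-t \<in> S\<close> by blast
  then show "v - lower_coeff v *\<^sub>R u \<in> K" unfolding lower_coeff_def S_def by simp
  show "\<alpha> \<le> lower_coeff v" if "v - \<alpha> *\<^sub>R u \<in> K"
    using cSup_upper[OF _ bdd] that unfolding lower_coeff_def S_def by simp
qed

lemmas lower_coeff_below = lower_coeff_below_greatest(1)
  and lower_coeff_greatest = lower_coeff_below_greatest(2)

definition upper_coeff :: "'a \<Rightarrow> real" where
  "upper_coeff v = - lower_coeff (- v)"

lemma upper_coeff_above:
  assumes "v \<in> E"
  shows "upper_coeff v *\<^sub>R u - v \<in> K"
proof -
  have "- v \<in> E" using assms E_subspace subspace_neg by blast
  moreover have "upper_coeff v *\<^sub>R u - v = - v - lower_coeff (- v) *\<^sub>R u"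
    by (simp add: upper_coeff_def algebra_simps)
  ultimately show ?thesis using lower_coeff_below by metis
qed

lemma lower_coeff_le_upper: "v \<in> E \<Longrightarrow> lower_coeff v \<le> upper_coeff v"
  using lower_coeff_below upper_coeff_above by (rule u_multiples_le)

lemma norm_diff_lower_coeff_le:
  obtains C where "C > 0"
    "\<And>v. v \<in> E \<Longrightarrow> norm (v - lower_coeff v *\<^sub>R u) \<le> C * (upper_coeff v - lower_coeff v)"
proof -
  obtain C where C: "C > 0" "\<And>v s. v \<in> K \<Longrightarrow> s *\<^sub>R u - v \<in> K \<Longrightarrow> norm v \<le> C * s"
    using norm_bounded_by_u by blast
  have "norm (v - lower_coeff v *\<^sub>R u) \<le> C * (upper_coeff v - lower_coeff v)"
    if "v \<in> E" for v
  proof (rule C(2))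
    show "v - lower_coeff v *\<^sub>R u \<in> K" using lower_coeff_below[OF that] .
    have eq: "(upper_coeff v - lower_coeff v) *\<^sub>R u - (v - lower_coeff v *\<^sub>R u) =
        upper_coeff v *\<^sub>R u - v"
      by (simp add: algebra_simps)
    show "(upper_coeff v - lower_coeff v) *\<^sub>R u - (v - lower_coeff v *\<^sub>R u) \<in> K"
      unfolding eq using upper_coeff_above[OF that] .
  qed
  then show ?thesis using that C(1) by blast
qed

lemma lower_coeff_le_N: "v \<in> E \<Longrightarrow> lower_coeff v \<le> lower_coeff (N v)"
  using N_K[OF lower_coeff_below] N_space by (intro lower_coeff_greatest) (auto simp: N_diff_u)

lemma lower_coeff_N_eventually_gt:
  assumes "\<And>m. y m \<in> E" "y \<longlonglongrightarrow> y0" "y0 - \<alpha> *\<^sub>R u \<in> K" "y0 \<noteq> \<alpha> *\<^sub>R u"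
  obtains \<delta> where "\<delta> > 0" "\<forall>\<^sub>F m in sequentially. \<alpha> + \<delta> \<le> lower_coeff (N (y m))"
proof -
  have "y0 - \<alpha> *\<^sub>R u \<noteq> 0" using assms(4) by simp
  then obtain \<delta> where \<delta>: "\<delta> > 0" "N (y0 - \<alpha> *\<^sub>R u) - \<delta> *\<^sub>R u \<in> interior_in E K"
    using N_minus_u_interior[OF assms(3)] by blast
  define z where "z m = N (y m) - (\<alpha> + \<delta>) *\<^sub>R u" for m
  have "(\<lambda>m. N (y m)) \<longlonglongrightarrow> N y0"
    using N_linear assms(2) linear_conv_bounded_linear bounded_linear.tendsto by blast
  then have "z \<longlonglongrightarrow> N y0 - (\<alpha> + \<delta>) *\<^sub>R u"
    unfolding z_def by (intro tendsto_intros)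
  moreover have "N y0 - (\<alpha> + \<delta>) *\<^sub>R u \<in> interior_in E K"
    using \<delta>(2) by (simp add: N_diff_u algebra_simps)
  moreover have "z m \<in> E" for m
    unfolding z_def using N_space[OF assms(1)] u_K(3) E_subspace
    by (simp add: subspace_diff subspace_scale)
  ultimately have "\<forall>\<^sub>F m in sequentially. z m \<in> K"
    by (intro eventually_in_of_tendsto_interior_in)
  then have "\<forall>\<^sub>F m in sequentially. \<alpha> + \<delta> \<le> lower_coeff (N (y m))"
    by eventually_elim (use lower_coeff_greatest N_space[OF assms(1)] in \<open>simp add: z_def\<close>)
  then show ?thesis using \<delta>(1) that by blast
qed

lemma lower_coeff_N_pow_incseq: "w \<in> E \<Longrightarrow> incseq (\<lambda>m. lower_coeff ((N ^^ m) w))"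
  by (rule incseq_SucI) (simp add: lower_coeff_le_N N_pow_space)

lemma N_pow_uminus: "(N ^^ m) (- w) = - (N ^^ m) w"
  using linear_neg[OF N_pow_linear] by simp

lemma upper_coeff_N_pow_decseq:
  assumes "w \<in> E"
  shows "decseq (\<lambda>m. upper_coeff ((N ^^ m) w))"
proof -
  have "- w \<in> E" using assms E_subspace subspace_neg by blast
  then show ?thesis
    using lower_coeff_N_pow_incseq[of "- w"]
    by (simp add: upper_coeff_def decseq_eq_incseq N_pow_uminus)
qed

text \<open>The limit points of the orbit of w are pinned down by the limit of its lower
  coefficients, because N pushes any limit point strictly above that limit.\<close>

lemma limit_point_N_orbit_lower:
  assumes w: "w \<in> E" and L: "(\<lambda>m. lower_coeff ((N ^^ m) w)) \<longlonglongrightarrow> L"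
    and \<sigma>: "strict_mono \<sigma>" "(\<lambda>m. (N ^^ \<sigma> m) w) \<longlonglongrightarrow> z"
  shows "z = L *\<^sub>R u"
proof (rule ccontr)
  assume ne: "z \<noteq> L *\<^sub>R u"
  have le_L: "lower_coeff ((N ^^ m) w) \<le> L" for m
    using incseq_le[OF lower_coeff_N_pow_incseq[OF w] L] by blast
  have "(\<lambda>m. lower_coeff ((N ^^ \<sigma> m) w)) \<longlonglongrightarrow> L"
    using LIMSEQ_subseq_LIMSEQ[OF L \<sigma>(1)] by (simp add: o_def)
  then have "(\<lambda>m. (N ^^ \<sigma> m) w - lower_coeff ((N ^^ \<sigma> m) w) *\<^sub>R u) \<longlonglongrightarrow> z - L *\<^sub>R u"
    by (intro tendsto_diff tendsto_scaleR \<sigma>(2) tendsto_const)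
  then have "z - L *\<^sub>R u \<in> K"
    by (rule closed_sequentially[OF K_closed, rotated])
      (rule lower_coeff_below[OF N_pow_space[OF w]])
  moreover have "(N ^^ \<sigma> m) w \<in> E" for m using N_pow_space[OF w] .
  ultimately obtain \<delta> where \<delta>: "\<delta> > 0"
    "\<forall>\<^sub>F m in sequentially. L + \<delta> \<le> lower_coeff (N ((N ^^ \<sigma> m) w))"
    using lower_coeff_N_eventually_gt[OF _ \<sigma>(2) _ ne] by blast
  then obtain m0 where "\<forall>m\<ge>m0. L + \<delta> \<le> lower_coeff (N ((N ^^ \<sigma> m) w))"
    unfolding eventually_sequentially by blast
  then have "L + \<delta> \<le> lower_coeff ((N ^^ Suc (\<sigma> m0)) w)" by simp
  then show False using le_L[of "Suc (\<sigma> m0)"] \<delta>(1) by simp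
qed

lemma limit_point_N_orbit_upper:
  assumes "w \<in> E" "(\<lambda>m. upper_coeff ((N ^^ m) w)) \<longlonglongrightarrow> L"
    and "strict_mono \<sigma>" "(\<lambda>m. (N ^^ \<sigma> m) w) \<longlonglongrightarrow> z"
  shows "z = L *\<^sub>R u"
proof -
  have "- z = (- L) *\<^sub>R u"
  proof (rule limit_point_N_orbit_lower)
    show "- w \<in> E" using assms(1) E_subspace subspace_neg by blast
    show "(\<lambda>m. lower_coeff ((N ^^ m) (- w))) \<longlonglongrightarrow> - L"
      using tendsto_minus[OF assms(2)] by (simp add: upper_coeff_def N_pow_uminus)
    show "(\<lambda>m. (N ^^ \<sigma> m) (- w)) \<longlonglongrightarrow> - z"
      using tendsto_minus[OF assms(4)] by (simp add: N_pow_uminus)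
  qed (rule assms(3))
  then show ?thesis by simp
qed

lemma lower_upper_coeff_limits_eq:
  assumes w: "w \<in> E" and LA: "(\<lambda>m. lower_coeff ((N ^^ m) w)) \<longlonglongrightarrow> LA"
    and LB: "(\<lambda>m. upper_coeff ((N ^^ m) w)) \<longlonglongrightarrow> LB"
  shows "LA = LB"
proof -
  define z where "z m = (N ^^ m) w" for m
  define a where "a m = lower_coeff (z m)" for m
  obtain C where C: "C > 0" "\<And>m. norm (z m - a m *\<^sub>R u) \<le> C * (upper_coeff (z m) - a m)"
    using norm_diff_lower_coeff_le N_pow_space[OF w] unfolding a_def z_def by metis
  have "norm (z m - a m *\<^sub>R u) \<le> C * (upper_coeff (z 0) - a 0)" for m
  proof -
    have "upper_coeff (z m) - a m \<le> upper_coeff (z 0) - a 0"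
      using decseqD[OF upper_coeff_N_pow_decseq[OF w], of 0 m]
        incseqD[OF lower_coeff_N_pow_incseq[OF w], of 0 m] by (simp add: a_def z_def)
    then show ?thesis using C by (smt (verit) mult_left_mono)
  qed
  then have "bounded (range (\<lambda>m. z m - a m *\<^sub>R u))"
    unfolding bounded_iff by blast
  then obtain d \<sigma> where \<sigma>: "strict_mono \<sigma>" "((\<lambda>m. z m - a m *\<^sub>R u) \<circ> \<sigma>) \<longlonglongrightarrow> d"
    using bounded_imp_convergent_subsequence by blast
  have "(\<lambda>m. (z (\<sigma> m) - a (\<sigma> m) *\<^sub>R u) + a (\<sigma> m) *\<^sub>R u) \<longlonglongrightarrow> d + LA *\<^sub>R u"
    using \<sigma>(2) LIMSEQ_subseq_LIMSEQ[OF LA \<sigma>(1)] unfolding o_def a_def z_def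
    by (intro tendsto_intros)
  then have "(\<lambda>m. (N ^^ \<sigma> m) w) \<longlonglongrightarrow> d + LA *\<^sub>R u" by (simp add: z_def)
  then have "d + LA *\<^sub>R u = LA *\<^sub>R u" "d + LA *\<^sub>R u = LB *\<^sub>R u"
    using limit_point_N_orbit_lower[OF w LA \<sigma>(1)] limit_point_N_orbit_upper[OF w LB \<sigma>(1)]
    by blast+
  then show "LA = LB" using u_K(2) by simp
qed

lemma tendsto_N_pow:
  assumes w: "w \<in> E"
  obtains c where "(\<lambda>m. (N ^^ m) w) \<longlonglongrightarrow> c *\<^sub>R u"
proof -
  define a where "a m = lower_coeff ((N ^^ m) w)" for m
  define b where "b m = upper_coeff ((N ^^ m) w)" for m
  have a_inc: "incseq a" and b_dec: "decseq b"
    unfolding a_def b_def using lower_coeff_N_pow_incseq[OF w] upper_coeff_N_pow_decseq[OF w] .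
  have "a m \<le> b 0" "a 0 \<le> b m" for m
    using lower_coeff_le_upper[OF N_pow_space[OF w], of m] decseqD[OF b_dec, of 0 m]
      incseqD[OF a_inc, of 0 m]
    unfolding a_def b_def by linarith+
  then obtain LA LB where LA: "a \<longlonglongrightarrow> LA" and LB: "b \<longlonglongrightarrow> LB"
    using incseq_convergent[OF a_inc] decseq_convergent[OF b_dec] by meson
  have "LA = LB"
    using lower_upper_coeff_limits_eq[OF w] LA LB unfolding a_def b_def by blast
  obtain C where C: "C > 0" "\<And>m. norm ((N ^^ m) w - a m *\<^sub>R u) \<le> C * (b m - a m)"
    using norm_diff_lower_coeff_le N_pow_space[OF w] unfolding a_def b_def by metis
  have "(\<lambda>m. (N ^^ m) w - a m *\<^sub>R u) \<longlonglongrightarrow> 0"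
  proof (rule Lim_null_comparison)
    show "\<forall>\<^sub>F m in sequentially. norm ((N ^^ m) w - a m *\<^sub>R u) \<le> C * (b m - a m)"
      using C(2) by simp
    show "(\<lambda>m. C * (b m - a m)) \<longlonglongrightarrow> 0"
      using tendsto_mult[OF tendsto_const[of C] tendsto_diff[OF LB LA]] \<open>LA = LB\<close> by simp
  qed
  then have "(\<lambda>m. ((N ^^ m) w - a m *\<^sub>R u) + a m *\<^sub>R u) \<longlonglongrightarrow> 0 + LA *\<^sub>R u"
    by (intro tendsto_intros LA)
  then show ?thesis using that by simp
qed

lemma N_pow_eq: "(N ^^ m) w = (1 / \<rho> ^ m) *\<^sub>R (M ^^ m) w"
proof (induction m)
  case (Suc m)
  then show ?case
    using linear_cmul[OF M_linear] by (simp add: N_def)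
qed simp

text \<open>Some orbit from a spanning set has a nonzero limit, for otherwise the orbit of u,
  which is constant, would tend to 0.\<close>

lemma exists_N_orbit_tendsto_nonzero:
  assumes "finite B" "B \<subseteq> E" "E \<subseteq> span B"
  obtains w c where "w \<in> B" "c \<noteq> 0" "(\<lambda>m. (N ^^ m) w) \<longlonglongrightarrow> c *\<^sub>R u"
proof -
  have "\<forall>w\<in>B. \<exists>c. (\<lambda>m. (N ^^ m) w) \<longlonglongrightarrow> c *\<^sub>R u"
    using tendsto_N_pow assms(2) by blast
  then obtain c where c: "\<And>w. w \<in> B \<Longrightarrow> (\<lambda>m. (N ^^ m) w) \<longlonglongrightarrow> c w *\<^sub>R u"
    by metis
  have "\<exists>w\<in>B. c w \<noteq> 0"
  proof (rule ccontr)
    assume "\<not> (\<exists>w\<in>B. c w \<noteq> 0)"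
    then have zero: "(\<lambda>m. (N ^^ m) w) \<longlonglongrightarrow> 0" if "w \<in> B" for w
      using c[OF that] that by simp
    obtain a where a: "u = (\<Sum>w\<in>B. a w *\<^sub>R w)"
      using assms(1,3) u_K(3) span_finite by blast
    have "(\<lambda>m. (N ^^ m) u) \<longlonglongrightarrow> (\<Sum>w\<in>B. a w *\<^sub>R 0)"
      unfolding a linear_sum[OF N_pow_linear] linear_cmul[OF N_pow_linear]
      by (intro tendsto_sum tendsto_scaleR tendsto_const zero)
    then have "(\<lambda>m. u) \<longlonglongrightarrow> 0" using N_pow_u by simp
    then show False using u_K(2) by (simp add: LIMSEQ_const_iff)
  qed
  then show ?thesis using that c by blast
qed

end

context cone_positive_map
begin

lemma exists_iterate_in_signed_interior:
  assumes "finite B" "B \<subseteq> E" "E \<subseteq> span B"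
  obtains w m where "w \<in> B" "(M ^^ m) w \<in> signed_interior_in E K"
proof -
  obtain u \<rho> where u: "u \<in> interior_in E K" "\<rho> > 0" "M u = \<rho> *\<^sub>R u"
    by (rule exists_interior_eigenvector)
  have "cone_positive_map_eigenvector E K M u \<rho>"
    by (intro cone_positive_map_eigenvector.intro cone_positive_map_axioms
        cone_positive_map_eigenvector_axioms.intro u)
  then interpret eig: cone_positive_map_eigenvector E K M u \<rho> .
  obtain w c where w: "w \<in> B" "c \<noteq> 0" "(\<lambda>m. (eig.N ^^ m) w) \<longlonglongrightarrow> c *\<^sub>R u"
    using eig.exists_N_orbit_tendsto_nonzero[OF assms] by blast
  have "c *\<^sub>R u \<in> signed_interior_in E K"
    using u(1) w(2) signed_interior_in_scaleR[OF E_subspace K_cone K_subset]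
    unfolding signed_interior_in_def by blast
  then obtain r where r: "r > 0"
    "\<And>y. y \<in> E \<Longrightarrow> dist y (c *\<^sub>R u) < r \<Longrightarrow> y \<in> signed_interior_in E K"
    using signed_interior_in_ball by blast
  obtain m where "dist ((eig.N ^^ m) w) (c *\<^sub>R u) < r"
    using tendstoD[OF w(3) r(1)] unfolding eventually_sequentially by blast
  then have "(eig.N ^^ m) w \<in> signed_interior_in E K"
    using r(2) eig.N_pow_space assms(2) w(1) by blast
  then have "(\<rho> ^ m) *\<^sub>R (eig.N ^^ m) w \<in> signed_interior_in E K"
    using signed_interior_in_scaleR[OF E_subspace K_cone K_subset] u(2) by simp
  then show ?thesis using that w(1) u(2) by (simp add: eig.N_pow_eq)
qed

lemma M_signed_interior:
  assumes "w \<in> (K \<union> uminus ` K) - {0}"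
  shows "M w \<in> signed_interior_in E K"
proof (cases "w \<in> K")
  case True
  then show ?thesis using M_positive assms unfolding signed_interior_in_def by blast
next
  case False
  then have "- w \<in> K - {0}" using assms by (auto simp: image_iff)
  then have "- M w \<in> interior_in E K" using M_positive linear_neg[OF M_linear] by force
  then show ?thesis
    using interior_in_uminus[OF E_subspace K_subset] unfolding signed_interior_in_def
    by (metis UnI2 image_eqI minus_minus)
qed

end

section \<open>Minors and the Cauchy-Binet formula\<close>

definition minor :: "nat \<Rightarrow> (nat \<Rightarrow> real^'n) \<Rightarrow> (nat \<Rightarrow> 'n) \<Rightarrow> real" where
  "minor k x r = (\<Sum>p | p permutes {..<k}. of_int (sign p) * (\<Prod>i<k. x i $ r (p i)))"

lemma minor_cong:
  assumes "\<And>i. i < k \<Longrightarrow> x i = y i" "\<And>i. i < k \<Longrightarrow> r i = s i"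
  shows "minor k x r = minor k y s"
  unfolding minor_def
proof (intro sum.cong refl arg_cong2[where f="(*)"] prod.cong)
  fix p i assume "p \<in> {p. p permutes {..<k}}" "i \<in> {..<k}"
  then show "x i $ r (p i) = y i $ s (p i)"
    using assms permutes_in_image[of p "{..<k}" i] by auto
qed

lemma minor_permute:
  assumes q: "q permutes {..<k}"
  shows "minor k (x \<circ> q) r = of_int (sign q) * minor k x r"
proof -
  have qp: "permutation q" using q permutation_permutes by blast
  have "minor k (x \<circ> q) r =
      (\<Sum>p | p permutes {..<k}. of_int (sign p) * (\<Prod>i<k. x i $ r (p (inv q i))))"
    unfolding minor_def
  proof (intro sum.cong refl arg_cong2[where f="(*)"])
    fix p
    have "(\<Prod>i<k. (x \<circ> q) i $ r (p i)) = (\<Prod>i<k. ((\<lambda>i. (x \<circ> q) i $ r (p i)) \<circ> inv q) i)"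
      using prod.permute[OF permutes_inv[OF q]] by blast
    then show "(\<Prod>i<k. (x \<circ> q) i $ r (p i)) = (\<Prod>i<k. x i $ r (p (inv q i)))"
      using permutes_inverses(1)[OF q] by (simp add: o_def)
  qed
  also have "\<dots> = (\<Sum>p | p permutes {..<k}.
      of_int (sign (p \<circ> q)) * (\<Prod>i<k. x i $ r ((p \<circ> q) (inv q i))))"
    by (rule sum_permutations_compose_right[OF q])
  also have "\<dots> = (\<Sum>p | p permutes {..<k}.
      of_int (sign q) * (of_int (sign p) * (\<Prod>i<k. x i $ r (p i))))"
  proof (intro sum.cong refl)
    fix p assume "p \<in> {p. p permutes {..<k}}"
    then have "permutation p" using permutation_permutes by blast
    then show "of_int (sign (p \<circ> q)) * (\<Prod>i<k. x i $ r ((p \<circ> q) (inv q i))) =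
      of_int (sign q) * (of_int (sign p) * (\<Prod>i<k. x i $ r (p i)))"
      using permutes_inverses(1)[OF q] sign_compose[OF _ qp] by simp
  qed
  also have "\<dots> = of_int (sign q) * minor k x r"
    unfolding minor_def by (simp add: sum_distrib_left)
  finally show ?thesis .
qed

lemma minor_eq_0_if_eq:
  assumes "a < k" "b < k" "a \<noteq> b" "x a = x b"
  shows "minor k x r = 0"
proof -
  have q: "Transposition.transpose a b permutes {..<k}"
    using assms by (intro permutes_swap_id) auto
  have "minor k x r = minor k (x \<circ> Transposition.transpose a b) r"
    by (rule minor_cong) (use assms in \<open>auto simp: Transposition.transpose_def\<close>)
  also have "\<dots> = - minor k x r"
    using minor_permute[OF q] assms by (simp add: sign_swap_id)
  finally show ?thesis by simp
qed

lemma minor_transpose: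
  "minor k x r = (\<Sum>p | p permutes {..<k}. of_int (sign p) * (\<Prod>i<k. x (p i) $ r i))"
proof -
  have "minor k x r =
      (\<Sum>p | p permutes {..<k}. of_int (sign (inv p)) * (\<Prod>i<k. x i $ r (inv p i)))"
    unfolding minor_def by (rule sum_permutations_inverse)
  also have "\<dots> = (\<Sum>p | p permutes {..<k}. of_int (sign p) * (\<Prod>i<k. x (p i) $ r i))"
  proof (intro sum.cong refl arg_cong2[where f="(*)"])
    fix p assume "p \<in> {p. p permutes {..<k}}"
    then have p: "p permutes {..<k}" by simp
    then show "of_int (sign (inv p)) = (of_int (sign p) :: real)"
      using sign_inverse permutation_permutes by (metis finite_lessThan)
    have "(\<Prod>i<k. x i $ r (inv p i)) = (\<Prod>i<k. ((\<lambda>i. x i $ r (inv p i)) \<circ> p) i)"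
      using prod.permute[OF p] by blast
    then show "(\<Prod>i<k. x i $ r (inv p i)) = (\<Prod>i<k. x (p i) $ r i)"
      using permutes_inverses(2)[OF p] by (simp add: o_def)
  qed
  finally show ?thesis .
qed

lemma minor_update_add:
  assumes "a < k"
  shows "minor k (x(a := u + c *\<^sub>R v)) r = minor k (x(a := u)) r + c * minor k (x(a := v)) r"
proof -
  have split: "(\<Prod>i<k. y i $ r (p i)) = y a $ r (p a) * (\<Prod>i\<in>{..<k} - {a}. y i $ r (p i))"
    for y :: "nat \<Rightarrow> (real, _) vec" and p
    using assms by (subst prod.remove[of "{..<k}" a]) auto
  have rest: "(\<Prod>i\<in>{..<k} - {a}. (x(a := w)) i $ r (p i)) = (\<Prod>i\<in>{..<k} - {a}. x i $ r (p i))"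
    for p w
    by (intro prod.cong) auto
  show ?thesis
    unfolding minor_def by (simp add: split rest sum.distrib sum_distrib_left algebra_simps)
qed

lemma minor_eq_0_if_row_zero:
  assumes "a < k" "\<And>l. l < k \<Longrightarrow> x a $ r l = 0"
  shows "minor k x r = 0"
  unfolding minor_def
proof (rule sum.neutral, rule ballI)
  fix p assume "p \<in> {p. p permutes {..<k}}"
  then have "p a < k" using assms(1) permutes_in_image by fastforce
  then have "(\<Prod>i<k. x i $ r (p i)) = 0"
    using assms by (intro prod_zero bexI[of _ a]) auto
  then show "of_int (sign p) * (\<Prod>i<k. x i $ r (p i)) = 0" by simp
qed

lemma minor_update_scaleR:
  assumes "a < k"
  shows "minor k (x(a := c *\<^sub>R v)) r = c * minor k (x(a := v)) r"
proof -
  have "minor k (x(a := 0 + c *\<^sub>R v)) r = minor k (x(a := 0)) r + c * minor k (x(a := v)) r"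
    by (rule minor_update_add[OF assms])
  moreover have "minor k (x(a := 0)) r = 0" using assms by (intro minor_eq_0_if_row_zero[of a]) auto
  ultimately show ?thesis by simp
qed

lemma minor_matrix_vector_mult_expand:
  fixes A :: "real^'n::finite^'n"
  shows "minor k (\<lambda>i. A *v x i) r =
    (\<Sum>\<tau>\<in>Pi\<^sub>E {..<k} (\<lambda>_. UNIV). (\<Prod>i<k. x i $ \<tau> i) * minor k (\<lambda>i. column (\<tau> i) A) r)"
proof -
  have "minor k (\<lambda>i. A *v x i) r = (\<Sum>p | p permutes {..<k}. of_int (sign p) *
      (\<Prod>i<k. \<Sum>l\<in>UNIV. A $ r (p i) $ l * x i $ l))"
    unfolding minor_def by (simp add: matrix_vector_mult_def)
  also have "\<dots> = (\<Sum>p | p permutes {..<k}. of_int (sign p) *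
      (\<Sum>\<tau>\<in>Pi\<^sub>E {..<k} (\<lambda>_. UNIV). \<Prod>i<k. A $ r (p i) $ \<tau> i * x i $ \<tau> i))"
    by (subst prod_sum_PiE) auto
  also have "\<dots> = (\<Sum>p | p permutes {..<k}. \<Sum>\<tau>\<in>Pi\<^sub>E {..<k} (\<lambda>_. UNIV).
      (\<Prod>i<k. x i $ \<tau> i) * (of_int (sign p) * (\<Prod>i<k. A $ r (p i) $ \<tau> i)))"
    by (simp add: sum_distrib_left prod.distrib mult_ac)
  also have "\<dots> = (\<Sum>\<tau>\<in>Pi\<^sub>E {..<k} (\<lambda>_. UNIV). \<Sum>p | p permutes {..<k}.
      (\<Prod>i<k. x i $ \<tau> i) * (of_int (sign p) * (\<Prod>i<k. A $ r (p i) $ \<tau> i)))"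
    by (rule sum.swap)
  also have "\<dots> = (\<Sum>\<tau>\<in>Pi\<^sub>E {..<k} (\<lambda>_. UNIV). (\<Prod>i<k. x i $ \<tau> i) * minor k (\<lambda>i. column (\<tau> i) A) r)"
    unfolding minor_def by (simp add: sum_distrib_left column_def)
  finally show ?thesis .
qed

lemma minor_eq_1:
  assumes "\<And>i p. i < k \<Longrightarrow> p < k \<Longrightarrow> x i $ r p = (if i = p then 1 else 0)"
  shows "minor k x r = 1"
proof -
  have "minor k x r = (\<Sum>p\<in>{id}. of_int (sign p) * (\<Prod>i<k. x i $ r (p i)))"
    unfolding minor_def
  proof (rule sum.mono_neutral_right)
    show "finite {p. p permutes {..<k}}" by (simp add: finite_permutations)
    show "{id} \<subseteq> {p. p permutes {..<k}}" by simp
    show "\<forall>p\<in>{p. p permutes {..<k}} - {id}. of_int (sign p) * (\<Prod>i<k. x i $ r (p i)) = 0"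
    proof
      fix p assume p: "p \<in> {p. p permutes {..<k}} - {id}"
      then obtain i where i: "p i \<noteq> i" by (auto simp: fun_eq_iff)
      then have "i < k" using p by (auto simp: permutes_def)
      moreover have "p i < k" using p \<open>i < k\<close> permutes_in_image by fastforce
      ultimately have "x i $ r (p i) = 0" using assms i by auto
      then have "(\<Prod>i<k. x i $ r (p i)) = 0" using \<open>i < k\<close> by (intro prod_zero) auto
      then show "of_int (sign p) * (\<Prod>i<k. x i $ r (p i)) = 0" by simp
    qed
  qed
  also have "\<dots> = 1" using assms by simp
  finally show ?thesis .
qed

lemma sorted_list_of_set_nth_image:
  fixes J :: "'a::linorder set"
  assumes "finite J" "card J = k" "\<pi> permutes {..<k}"
  shows "(\<lambda>i. sorted_list_of_set J ! \<pi> i) ` {..<k} = J"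
proof -
  have "(\<lambda>i. sorted_list_of_set J ! \<pi> i) ` {..<k} = (\<lambda>i. sorted_list_of_set J ! i) ` (\<pi> ` {..<k})"
    by auto
  also have "\<dots> = set (sorted_list_of_set J)"
    using permutes_image[OF assms(3)] assms(2) by (auto simp: set_conv_nth)
  finally show ?thesis using assms(1) by simp
qed

lemma sorted_list_of_set_nth_eq_iff:
  fixes J :: "'a::linorder set"
  assumes "finite J" "i < card J" "i' < card J"
  shows "sorted_list_of_set J ! i = sorted_list_of_set J ! i' \<longleftrightarrow> i = i'"
  using assms nth_eq_iff_index_eq[of "sorted_list_of_set J" i i'] by simp

lemma inj_on_sorted_list_of_set_permute:
  fixes J :: "'a::linorder set"
  assumes "finite J" "card J = k" "\<pi> permutes {..<k}"
  shows "inj_on (\<lambda>i. sorted_list_of_set J ! \<pi> i) {..<k}"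
proof (rule inj_onI)
  fix i i' assume "i \<in> {..<k}" "i' \<in> {..<k}"
    "sorted_list_of_set J ! \<pi> i = sorted_list_of_set J ! \<pi> i'"
  then have "\<pi> i = \<pi> i'"
    using assms permutes_in_image[OF assms(3)] sorted_list_of_set_nth_eq_iff[of J] by simp
  then show "i = i'" using permutes_inj[OF assms(3)] by (auto dest: injD)
qed

lemma sorted_list_of_set_permute_eq:
  fixes J J' :: "'a::linorder set"
  assumes "finite J" "finite J'" "card J = k" "card J' = k"
    and "\<pi> permutes {..<k}" "\<pi>' permutes {..<k}"
    and eq: "\<And>i. i < k \<Longrightarrow> sorted_list_of_set J ! \<pi> i = sorted_list_of_set J' ! \<pi>' i"
  shows "J = J'" "\<pi> = \<pi>'"
proof -
  show "J = J'"
    using sorted_list_of_set_nth_image[of J k \<pi>] sorted_list_of_set_nth_image[of J' k \<pi>'] assms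
    by (metis (no_types, lifting) image_cong lessThan_iff)
  have "\<pi> i = \<pi>' i" for i
  proof (cases "i < k")
    case True
    then have "\<pi> i < k" "\<pi>' i < k" using assms(5,6) permutes_in_image by fastforce+
    then show ?thesis
      using eq[OF True] sorted_list_of_set_nth_eq_iff[of J] \<open>J = J'\<close> assms(1,3) by simp
  next
    case False
    then show ?thesis using assms(5,6) by (simp add: permutes_def)
  qed
  then show "\<pi> = \<pi>'" by blast
qed

lemma injective_tuple_eq_sorted_list_permute:
  fixes \<tau> :: "nat \<Rightarrow> 'a::{finite,linorder}"
  assumes "inj_on \<tau> {..<k}"
  shows "\<exists>\<pi>. \<pi> permutes {..<k} \<and> (\<forall>i<k. sorted_list_of_set (\<tau> ` {..<k}) ! \<pi> i = \<tau> i)"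
proof -
  define J where "J = \<tau> ` {..<k}"
  define s where "s i = sorted_list_of_set J ! i" for i
  have J: "card J = k" unfolding J_def using card_image[OF assms] by simp
  have s_inj: "inj_on s {..<k}"
    using sorted_list_of_set_nth_eq_iff[of J] J unfolding s_def by (auto intro: inj_onI)
  have \<tau>_in: "\<tau> i \<in> s ` {..<k}" if "i < k" for i
    using that sorted_list_of_set_nth_image[OF _ J permutes_id] unfolding s_def J_def by auto
  define \<pi> where "\<pi> i = (if i < k then the_inv_into {..<k} s (\<tau> i) else i)" for i
  have \<pi>_lt: "\<pi> i < k" if "i < k" for i
    using the_inv_into_into[OF s_inj \<tau>_in[OF that]] that unfolding \<pi>_def by auto
  have s_\<pi>: "s (\<pi> i) = \<tau> i" if "i < k" for i
    using f_the_inv_into_f[OF s_inj \<tau>_in[OF that]] that unfolding \<pi>_def by auto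
  have \<pi>_inj: "inj_on \<pi> {..<k}"
    using assms s_\<pi> by (metis inj_onD inj_onI lessThan_iff)
  have "\<pi> ` {..<k} = {..<k}"
    by (rule endo_inj_surj) (use \<pi>_lt \<pi>_inj in auto)
  then have "bij_betw \<pi> {..<k} {..<k}" using \<pi>_inj by (simp add: bij_betw_def)
  then have "\<pi> permutes {..<k}" by (rule bij_imp_permutes) (simp add: \<pi>_def)
  moreover have "\<forall>i<k. sorted_list_of_set J ! \<pi> i = \<tau> i" using s_\<pi> unfolding s_def by simp
  ultimately show ?thesis unfolding J_def by blast
qed

lemma bij_betw_subsets_permutes_injective_tuples:
  "bij_betw (\<lambda>(J, \<pi>). restrict (\<lambda>i. sorted_list_of_set J ! \<pi> i) {..<k})
     (SIGMA J:{J::'n::{finite,linorder} set. card J = k}. {\<pi>. \<pi> permutes {..<k}})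
     {\<tau> \<in> Pi\<^sub>E {..<k} (\<lambda>_. UNIV). inj_on \<tau> {..<k}}"
    (is "bij_betw ?h ?S ?T")
proof (rule bij_betwI')
  fix a b assume "a \<in> ?S" "b \<in> ?S"
  then obtain J \<pi> J' \<pi>' where a: "a = (J, \<pi>)" "card J = k" "\<pi> permutes {..<k}"
    and b: "b = (J', \<pi>')" "card J' = k" "\<pi>' permutes {..<k}"
    by auto
  show "?h a = ?h b \<longleftrightarrow> a = b"
  proof
    assume eq: "?h a = ?h b"
    have "sorted_list_of_set J ! \<pi> i = sorted_list_of_set J' ! \<pi>' i" if "i < k" for i
      using fun_cong[OF eq, of i] that unfolding a b by simp
    then show "a = b" using sorted_list_of_set_permute_eq[of J J' k \<pi> \<pi>'] a b by simp
  qed simp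
next
  fix a assume "a \<in> ?S"
  then obtain J \<pi> where a: "a = (J, \<pi>)" "card J = k" "\<pi> permutes {..<k}" by auto
  then show "?h a \<in> ?T"
    using inj_on_sorted_list_of_set_permute[of J k \<pi>] by (auto simp: inj_on_def)
next
  fix \<tau> assume "\<tau> \<in> ?T"
  then have \<tau>: "\<tau> \<in> Pi\<^sub>E {..<k} (\<lambda>_. UNIV)" "inj_on \<tau> {..<k}" by auto
  obtain \<pi> where \<pi>: "\<pi> permutes {..<k}" "\<forall>i<k. sorted_list_of_set (\<tau> ` {..<k}) ! \<pi> i = \<tau> i"
    using injective_tuple_eq_sorted_list_permute[OF \<tau>(2)] by blast
  have "?h (\<tau> ` {..<k}, \<pi>) = \<tau>"
    using \<tau>(1) \<pi>(2) by (auto simp: PiE_def extensional_def fun_eq_iff)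
  moreover have "(\<tau> ` {..<k}, \<pi>) \<in> ?S" using card_image[OF \<tau>(2)] \<pi>(1) by simp
  ultimately show "\<exists>a\<in>?S. \<tau> = ?h a" by metis
qed

text \<open>Cauchy-Binet: expand each A x_i by multilinearity, discard the index tuples that
  are not injective, and group the injective ones by their image J.\<close>

theorem minor_matrix_vector_mult:
  fixes r :: "nat \<Rightarrow> 'n::{finite,linorder}" and A :: "((real,'n) vec, 'n) vec"
  shows "minor k (\<lambda>i. A *v x i) r =
    (\<Sum>J | card J = k. minor k (\<lambda>i. column (sorted_list_of_set J ! i) A) r *
        minor k x ((!) (sorted_list_of_set J)))"
proof -
  define D where "D \<tau> = minor k (\<lambda>i. column (\<tau> i) A) r" for \<tau>
  define g where "g \<tau> = (\<Prod>i<k. x i $ \<tau> i) * D \<tau>" for \<tau>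
  define P where "P = Pi\<^sub>E {..<k} (\<lambda>_. UNIV::'n set)"
  define h where "h = (\<lambda>(J :: 'n set, \<pi>). restrict (\<lambda>i. sorted_list_of_set J ! \<pi> i) {..<k})"
  have "minor k (\<lambda>i. A *v x i) r = sum g P"
    unfolding minor_matrix_vector_mult_expand g_def D_def P_def ..
  also have "\<dots> = sum g {\<tau> \<in> P. inj_on \<tau> {..<k}}"
  proof (rule sum.mono_neutral_right)
    show "finite P" unfolding P_def by (intro finite_PiE) auto
    show "\<forall>\<tau>\<in>P - {\<tau> \<in> P. inj_on \<tau> {..<k}}. g \<tau> = 0"
      unfolding g_def D_def inj_on_def
      by (auto intro: minor_eq_0_if_eq[of _ k] simp: column_def)
  qed auto
  also have "\<dots> = (\<Sum>(J, \<pi>) \<in> (SIGMA J:{J. card J = k}. {\<pi>. \<pi> permutes {..<k}}). g (h (J, \<pi>)))"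
    using sum.reindex_bij_betw[OF bij_betw_subsets_permutes_injective_tuples[of k], of g]
    unfolding h_def P_def by (simp add: case_prod_beta)
  also have "\<dots> = (\<Sum>J | card J = k. \<Sum>\<pi> | \<pi> permutes {..<k}. g (h (J, \<pi>)))"
    by (subst sum.Sigma) (auto simp: finite_permutations)
  also have "\<dots> = (\<Sum>J | card J = k.
      D ((!) (sorted_list_of_set J)) * minor k x ((!) (sorted_list_of_set J)))"
  proof (rule sum.cong[OF refl])
    fix J :: "'n set"
    have "g (h (J, \<pi>)) = D ((!) (sorted_list_of_set J)) *
        (of_int (sign \<pi>) * (\<Prod>i<k. x i $ sorted_list_of_set J ! \<pi> i))"
      if \<pi>: "\<pi> permutes {..<k}" for \<pi>
    proof -
      have "D (h (J, \<pi>)) = minor k ((\<lambda>i. column (sorted_list_of_set J ! i) A) \<circ> \<pi>) r"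
        unfolding D_def by (rule minor_cong) (auto simp: h_def)
      also have "\<dots> = of_int (sign \<pi>) * D ((!) (sorted_list_of_set J))"
        unfolding D_def by (rule minor_permute[OF \<pi>])
      finally show ?thesis unfolding g_def by (simp add: h_def)
    qed
    then show "(\<Sum>\<pi> | \<pi> permutes {..<k}. g (h (J, \<pi>))) =
        D ((!) (sorted_list_of_set J)) * minor k x ((!) (sorted_list_of_set J))"
      unfolding minor_def by (simp add: sum_distrib_left)
  qed
  finally show ?thesis unfolding D_def .
qed

section \<open>Exterior products and compound matrices\<close>

lemma wedge_component:
  "wedge xs $ I =
    (if card I = length xs then minor (length xs) ((!) xs) ((!) (sorted_list_of_set I)) else 0)"
  by (simp add: wedge_def minor_def Let_def)

lemma wedge_in_ext_space: "wedge xs \<in> ext_space (length xs)"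
  unfolding ext_space_def by (simp add: wedge_component)

lemma compound_component:
  "compound j A v $ I = (if card I = j then
      (\<Sum>J | card J = j. minor j (\<lambda>i. column (sorted_list_of_set J ! i) A)
        ((!) (sorted_list_of_set I)) * v $ J) else 0)"
proof -
  have "wedge (map (\<lambda>k. column k A) (sorted_list_of_set J)) $ I =
      minor j (\<lambda>i. column (sorted_list_of_set J ! i) A) ((!) (sorted_list_of_set I))"
    if "card I = j" "card J = j" for J
    using that by (simp add: wedge_component) (rule minor_cong; simp)
  then show ?thesis unfolding compound_def by simp
qed

lemma compound_in_ext_space: "compound j A v \<in> ext_space j"
  unfolding ext_space_def by (simp add: compound_component)

lemma linear_compound: "linear (compound j A)"
  by (rule linearI)
    (simp_all add: vec_eq_iff compound_component sum.distrib sum_distrib_left algebra_simps)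

lemma compound_wedge: "compound (length xs) A (wedge xs) = wedge (map (\<lambda>x. A *v x) xs)"
proof -
  have "minor (length xs) ((!) (map (\<lambda>x. A *v x) xs)) ((!) (sorted_list_of_set I)) =
      (\<Sum>J | card J = length xs. minor (length xs) (\<lambda>i. column (sorted_list_of_set J ! i) A)
        ((!) (sorted_list_of_set I)) * wedge xs $ J)" for I
  proof -
    have "minor (length xs) ((!) (map (\<lambda>x. A *v x) xs)) ((!) (sorted_list_of_set I)) =
        minor (length xs) (\<lambda>i. A *v (xs ! i)) ((!) (sorted_list_of_set I))"
      by (rule minor_cong) auto
    then show ?thesis
      by (simp add: minor_matrix_vector_mult wedge_component)
  qed
  then show ?thesis by (simp add: vec_eq_iff compound_component wedge_component)
qed

lemma linear_wedge_update:
  assumes "a < length L"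
  shows "linear (\<lambda>v. wedge (L[a := v]))"
proof (rule linearI)
  fix u v c
  have W: "wedge (L[a := w]) $ I = (if card I = length L
      then minor (length L) (((!) L)(a := w)) ((!) (sorted_list_of_set I)) else 0)" for w I
  proof -
    have "(!) (L[a := w]) = ((!) L)(a := w)"
      using assms by (auto simp: fun_eq_iff nth_list_update)
    then show ?thesis by (simp add: wedge_component)
  qed
  show "wedge (L[a := u + v]) = wedge (L[a := u]) + wedge (L[a := v])"
    using minor_update_add[OF assms, of "(!) L" u 1 v] by (simp add: vec_eq_iff W)
  show "wedge (L[a := c *\<^sub>R u]) = c *\<^sub>R wedge (L[a := u])"
    using minor_update_scaleR[OF assms, of "(!) L" c u] by (simp add: vec_eq_iff W)
qed

lemma wedge_eq_0_if_eq:
  assumes "a < length L" "b < length L" "a \<noteq> b" "L ! a = L ! b"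
  shows "wedge L = 0"
  using minor_eq_0_if_eq[OF assms] by (simp add: vec_eq_iff wedge_component)

lemma wedge_eq_0_if_zero:
  assumes "a < length L" "L ! a = 0"
  shows "wedge L = 0"
  using minor_eq_0_if_row_zero[of a "length L" "\<lambda>i. L ! i"] assms
  by (simp add: vec_eq_iff wedge_component)

lemma wedge_update_add_sum:
  assumes "a < length L" "B \<subseteq> {..<length L}" "a \<notin> B"
  shows "wedge (L[a := L ! a + (\<Sum>b\<in>B. c b *\<^sub>R L ! b)]) = wedge L"
proof -
  interpret lin: linear "\<lambda>v. wedge (L[a := v])" by (rule linear_wedge_update[OF assms(1)])
  have "wedge (L[a := L ! a + (\<Sum>b\<in>B. c b *\<^sub>R L ! b)]) =
        wedge (L[a := L ! a]) + (\<Sum>b\<in>B. c b *\<^sub>R wedge (L[a := L ! b]))"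
    by (simp add: lin.add lin.sum lin.scale)
  also have "(\<Sum>b\<in>B. c b *\<^sub>R wedge (L[a := L ! b])) = 0"
  proof (rule sum.neutral, rule ballI)
    fix b assume "b \<in> B"
    then have "b < length L" "a \<noteq> b" using assms by auto
    then have "wedge (L[a := L ! b]) = 0"
      using assms(1) by (intro wedge_eq_0_if_eq[of a _ b]) (auto simp: nth_list_update)
    then show "c b *\<^sub>R wedge (L[a := L ! b]) = 0" by simp
  qed
  finally show ?thesis by simp
qed

lemma wedge_append_diff_sum:
  "wedge (P @ (z - (\<Sum>b<length P. c b *\<^sub>R P ! b)) # zs) = wedge (P @ z # zs)"
proof -
  let ?L = "P @ z # zs"
  have "(\<Sum>b\<in>{..<length P}. (- c b) *\<^sub>R ?L ! b) = - (\<Sum>b<length P. c b *\<^sub>R P ! b)"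
    by (simp add: nth_append sum_negf[symmetric])
  moreover have "?L[length P := v] = P @ v # zs" for v by simp
  moreover have "wedge (?L[length P := ?L ! length P + (\<Sum>b\<in>{..<length P}. (- c b) *\<^sub>R ?L ! b)]) =
      wedge ?L"
    by (rule wedge_update_add_sum) auto
  ultimately show ?thesis by simp
qed

lemma wedge_update_scaleR:
  assumes "a < length L"
  shows "wedge (L[a := c *\<^sub>R L ! a]) = c *\<^sub>R wedge L"
proof -
  interpret lin: linear "\<lambda>v. wedge (L[a := v])" by (rule linear_wedge_update[OF assms(1)])
  show ?thesis by (simp add: lin.scale)
qed

lemma linear_wedge_Cons: "linear (\<lambda>v. wedge (v # xs))"
  using linear_wedge_update[of 0 "0 # xs"] by simp

lemma wedge_axis_sorted:
  fixes J :: "'n::{finite,linorder} set"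
  shows "wedge (map (\<lambda>k. axis k 1) (sorted_list_of_set J)) = axis J 1"
proof -
  let ?x = "\<lambda>i. map (\<lambda>k. axis k (1::real)) (sorted_list_of_set J) ! i"
  have "minor (card J) ?x (\<lambda>i. sorted_list_of_set I ! i) = (if I = J then 1 else 0)"
    if I: "card I = card J" for I
  proof (cases "I = J")
    case True
    have "minor (card J) ?x (\<lambda>i. sorted_list_of_set J ! i) = 1"
    proof (rule minor_eq_1)
      fix i p assume "i < card J" "p < card J"
      then show "?x i $ sorted_list_of_set J ! p = (if i = p then 1 else 0)"
        using sorted_list_of_set_nth_eq_iff[of J i p] by (auto simp: axis_def)
    qed
    then show ?thesis using True by simp
  next
    case False
    then obtain t where t: "t \<in> J" "t \<notin> I" using card_subset_eq[of I J] I by auto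
    then obtain i0 where i0: "i0 < card J" "sorted_list_of_set J ! i0 = t"
      using sorted_list_of_set_nth_image[of J "card J" id] by force
    have "minor (card J) ?x (\<lambda>i. sorted_list_of_set I ! i) = 0"
    proof (rule minor_eq_0_if_row_zero[OF i0(1)])
      fix l assume "l < card J"
      then have "sorted_list_of_set I ! l \<in> I"
        using nth_mem[of l "sorted_list_of_set I"] I by simp
      then show "?x i0 $ sorted_list_of_set I ! l = 0" using i0 t by (auto simp: axis_def)
    qed
    then show ?thesis using False by simp
  qed
  then show ?thesis by (auto simp: vec_eq_iff wedge_component axis_def)
qed

lemma ext_space_basis_expansion:
  assumes "v \<in> ext_space j"
  shows "v = (\<Sum>J | card J = j. v $ J *\<^sub>R axis J 1)"
proof -
  have "v = (\<Sum>J\<in>UNIV. v $ J *\<^sub>R axis J 1)"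
    using basis_expansion[of v] by (simp add: scalar_mult_eq_scaleR)
  also have "\<dots> = (\<Sum>J | card J = j. v $ J *\<^sub>R axis J 1)"
    using assms by (intro sum.mono_neutral_right) (auto simp: ext_space_def)
  finally show ?thesis .
qed

lemma wedge_tendsto:
  assumes len: "\<And>m. length (f m) = k" "length ys = k"
    and conv: "\<And>i. i < k \<Longrightarrow> (\<lambda>m. f m ! i) \<longlonglongrightarrow> ys ! i"
  shows "(\<lambda>m. wedge (f m)) \<longlonglongrightarrow> wedge ys"
proof (rule vec_tendstoI)
  fix I :: "'a set"
  show "(\<lambda>m. wedge (f m) $ I) \<longlonglongrightarrow> wedge ys $ I"
  proof (cases "card I = k")
    case True
    have "(\<lambda>m. minor k ((!) (f m)) ((!) (sorted_list_of_set I))) \<longlonglongrightarrow>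
        minor k ((!) ys) ((!) (sorted_list_of_set I))"
      unfolding minor_def
      by (intro tendsto_sum tendsto_mult tendsto_const tendsto_prod tendsto_vec_nth conv) auto
    then show ?thesis using True len by (simp add: wedge_component)
  next
    case False
    then show ?thesis using len by (simp add: wedge_component)
  qed
qed

lemma subspace_ext_space: "subspace (ext_space j)"
  unfolding subspace_def ext_space_def by auto

lemma axis_in_ext_space: "axis J 1 \<in> ext_space (card J)"
  unfolding ext_space_def by (simp add: axis_def)

lemma ext_space_nontrivial:
  assumes "j \<le> CARD('n::{finite,linorder})"
  shows "ext_space j \<noteq> ({0} :: (real^('n set)) set)"
proof -
  obtain J :: "'n set" where "card J = j"
    using obtain_subset_with_card_n[of j "UNIV :: 'n set"] assms by auto
  then have "axis J (1::real) \<in> ext_space j" "axis J (1::real) \<noteq> 0"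
    using axis_in_ext_space[of J] by simp_all
  then show ?thesis by (metis singletonD)
qed

lemma wedge_singleton_component: "wedge [x] $ {i} = x $ i"
proof -
  have "{p. p permutes {..<Suc 0}} = {id}" by (auto simp: lessThan_Suc)
  then show ?thesis by (simp add: wedge_component minor_def)
qed

lemma wedge_singleton_nonzero: "x \<noteq> 0 \<Longrightarrow> wedge [x] \<noteq> 0"
  by (metis vec_eq_iff wedge_singleton_component zero_index)

section \<open>Orthonormalising the factors of a wedge product\<close>

definition orthonormal_perp :: "'a::real_inner \<Rightarrow> 'a list \<Rightarrow> bool" where
  "orthonormal_perp x ys \<longleftrightarrow> (\<forall>y\<in>set ys. inner y x = 0) \<and>
     (\<forall>i<length ys. \<forall>k<length ys. inner (ys ! i) (ys ! k) = (if i = k then 1 else 0))"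

lemma orthonormal_perp_Nil: "orthonormal_perp x []"
  by (simp add: orthonormal_perp_def)

lemma orthonormal_perp_Cons_orthogonal:
  assumes "orthonormal_perp x ys" "x \<noteq> 0" "b < Suc (length ys)" "b' < Suc (length ys)"
  shows "(x # ys) ! b \<noteq> 0" and "b \<noteq> b' \<Longrightarrow> inner ((x # ys) ! b) ((x # ys) ! b') = 0"
proof -
  have ys: "inner (ys ! i) x = 0" "inner (ys ! i) (ys ! k) = (if i = k then 1 else 0)"
    if "i < length ys" "k < length ys" for i k
    using assms(1) that unfolding orthonormal_perp_def by auto
  show "(x # ys) ! b \<noteq> 0"
    using assms(2,3) ys(2) by (cases b) fastforce+
  show "inner ((x # ys) ! b) ((x # ys) ! b') = 0" if "b \<noteq> b'"
    using that assms(3,4) ys by (cases b; cases b') (auto simp: inner_commute)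
qed

lemma orthonormal_perp_snoc:
  assumes "orthonormal_perp x ys" "inner z x = 0" "\<And>y. y \<in> set ys \<Longrightarrow> inner z y = 0" "norm z = 1"
  shows "orthonormal_perp x (ys @ [z])"
proof -
  have "inner z z = 1" using assms(4) by (simp add: power2_norm_eq_inner[symmetric])
  moreover have "inner z (ys ! i) = 0" "inner (ys ! i) z = 0" if "i < length ys" for i
    using assms(3)[OF nth_mem[OF that]] by (simp_all add: inner_commute)
  ultimately show ?thesis
    using assms(1,2) unfolding orthonormal_perp_def
    by (auto simp: nth_append less_Suc_eq)
qed

lemma inner_sub_projections_eq_0:
  fixes P :: "'a::real_inner list"
  assumes "\<And>b. b < length P \<Longrightarrow> P ! b \<noteq> 0"
    and "\<And>b b'. b < length P \<Longrightarrow> b' < length P \<Longrightarrow> b \<noteq> b' \<Longrightarrow> inner (P ! b) (P ! b') = 0"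
    and "b0 < length P"
  shows "inner (z - (\<Sum>b<length P. (inner z (P ! b) / inner (P ! b) (P ! b)) *\<^sub>R P ! b)) (P ! b0) = 0"
proof -
  let ?c = "\<lambda>b. inner z (P ! b) / inner (P ! b) (P ! b)"
  have "(\<Sum>b<length P. ?c b * inner (P ! b) (P ! b0)) =
      ?c b0 * inner (P ! b0) (P ! b0) + (\<Sum>b\<in>{..<length P} - {b0}. ?c b * inner (P ! b) (P ! b0))"
    using assms(3) by (simp add: sum.remove)
  also have "(\<Sum>b\<in>{..<length P} - {b0}. ?c b * inner (P ! b) (P ! b0)) = 0"
    using assms(2,3) by (intro sum.neutral) auto
  also have "?c b0 * inner (P ! b0) (P ! b0) = inner z (P ! b0)"
    using assms(1)[OF assms(3)] by simp
  finally show ?thesis by (simp add: inner_diff_left inner_sum_left)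
qed

text \<open>One Gram-Schmidt step: subtracting from z its projections onto the earlier vectors
  does not change the wedge, and normalising only scales it by a positive factor.\<close>

lemma gram_schmidt_wedge_step:
  fixes x :: "real^'n::{finite,linorder}"
  assumes x: "x \<noteq> 0" and ys: "orthonormal_perp x ys" and nz: "wedge (x # ys @ z # zs) \<noteq> 0"
  obtains z' c where "c > 0" "wedge (x # ys @ z' # zs) = c *\<^sub>R wedge (x # ys @ z # zs)"
    "orthonormal_perp x (ys @ [z'])"
proof -
  define P where "P = x # ys"
  define w where "w = z - (\<Sum>b<length P. (inner z (P ! b) / inner (P ! b) (P ! b)) *\<^sub>R P ! b)"
  have P: "P ! b \<noteq> 0" "b' < length P \<Longrightarrow> b \<noteq> b' \<Longrightarrow> inner (P ! b) (P ! b') = 0"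
    if "b < length P" for b b'
    using orthonormal_perp_Cons_orthogonal[OF ys x] that unfolding P_def by auto
  have w_perp: "inner w (P ! b) = 0" if "b < length P" for b
    unfolding w_def using P that by (intro inner_sub_projections_eq_0) auto
  have w_wedge: "wedge (x # ys @ w # zs) = wedge (x # ys @ z # zs)"
    using wedge_append_diff_sum[of P z _ zs] unfolding w_def by (simp add: P_def)
  have "w \<noteq> 0"
  proof
    assume "w = 0"
    then have "wedge (x # ys @ w # zs) = 0"
      by (intro wedge_eq_0_if_zero[of "Suc (length ys)"]) auto
    then show False using w_wedge nz by simp
  qed
  define z' where "z' = (1 / norm w) *\<^sub>R w"
  have "wedge (x # ys @ z' # zs) = (1 / norm w) *\<^sub>R wedge (x # ys @ w # zs)"
    using wedge_update_scaleR[of "Suc (length ys)" "x # ys @ w # zs" "1 / norm w"]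
    by (simp add: z'_def list_update_append)
  moreover have "orthonormal_perp x (ys @ [z'])"
  proof (rule orthonormal_perp_snoc[OF ys])
    show "inner z' x = 0" using w_perp[of 0] by (simp add: z'_def P_def)
    show "inner z' y = 0" if "y \<in> set ys" for y
      using that w_perp[of "Suc i" for i] by (auto simp: z'_def P_def in_set_conv_nth)
    show "norm z' = 1" using \<open>w \<noteq> 0\<close> by (simp add: z'_def)
  qed
  ultimately show ?thesis
    using that[of "1 / norm w" z'] \<open>w \<noteq> 0\<close> w_wedge by simp
qed

lemma gram_schmidt_wedge:
  fixes x :: "real^'n::{finite,linorder}"
  assumes "x \<noteq> 0" "orthonormal_perp x ys" "wedge (x # ys @ zs) \<noteq> 0"
  obtains ys' c where "length ys' = length ys + length zs" "c > 0"
    "wedge (x # ys') = c *\<^sub>R wedge (x # ys @ zs)" "orthonormal_perp x ys'"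
  using assms(2,3)
proof (induction zs arbitrary: ys thesis)
  case Nil
  then show ?case by (metis append_Nil2 list.size(3) add_0_right scaleR_one zero_less_one)
next
  case (Cons z zs)
  obtain z' c where z': "c > 0" "wedge (x # ys @ z' # zs) = c *\<^sub>R wedge (x # ys @ z # zs)"
    "orthonormal_perp x (ys @ [z'])"
    using gram_schmidt_wedge_step[OF assms(1) Cons.prems(2,3)] by blast
  have "wedge (x # (ys @ [z']) @ zs) \<noteq> 0" using z'(1,2) Cons.prems(3) by simp
  then obtain ys' c' where "length ys' = length (ys @ [z']) + length zs" "c' > 0"
    "wedge (x # ys') = c' *\<^sub>R wedge (x # (ys @ [z']) @ zs)" "orthonormal_perp x ys'"
    using Cons.IH[OF _ z'(3)] by blast
  then show ?case using Cons.prems(1)[of ys' "c' * c"] z'(1,2) by simp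
qed

lemma compound_wedge_rows_component:
  fixes G :: "((real,'n::{finite,linorder}) vec, 'n) vec"
  assumes I: "card I = length V"
    and G: "\<And>p. p < length V \<Longrightarrow> G $ (sorted_list_of_set I ! p) = V ! p"
  shows "compound (length V) G (wedge V) $ I = (\<Sum>J | card J = length V. (wedge V $ J)\<^sup>2)"
proof -
  have "minor (length V) (\<lambda>i. column (sorted_list_of_set J ! i) G) ((!) (sorted_list_of_set I)) =
      wedge V $ J" if J: "card J = length V" for J
  proof -
    have "minor (length V) (\<lambda>i. column (sorted_list_of_set J ! i) G) ((!) (sorted_list_of_set I)) =
        (\<Sum>p | p permutes {..<length V}. of_int (sign p) *
          (\<Prod>i<length V. column (sorted_list_of_set J ! p i) G $ sorted_list_of_set I ! i))"
      by (rule minor_transpose)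
    also have "\<dots> = (\<Sum>p | p permutes {..<length V}. of_int (sign p) *
        (\<Prod>i<length V. (V ! i) $ (sorted_list_of_set J ! p i)))"
      by (intro sum.cong refl arg_cong2[where f="(*)"] prod.cong) (simp_all add: column_def G)
    also have "\<dots> = wedge V $ J" using J by (simp add: wedge_component minor_def)
    finally show ?thesis .
  qed
  then show ?thesis
    using I by (simp add: compound_component power2_eq_square)
qed

text \<open>Applying the compound of the matrix G with rows V to wedge V gives, by Cauchy-Binet,
  the sum of the squares of the coordinates of wedge V; on the other hand it is the wedge of
  the vectors G v, whose I-coordinate is the Gram determinant of V, i.e. 1.\<close>

lemma wedge_orthonormal_nonzero:
  fixes V :: "(real^'n::{finite,linorder}) list"
  assumes len: "length V \<le> CARD('n)"
    and orth: "\<And>i k. i < length V \<Longrightarrow> k < length V \<Longrightarrow>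
      inner (V ! i) (V ! k) = (if i = k then 1 else 0)"
  shows "wedge V \<noteq> 0"
proof
  assume "wedge V = 0"
  obtain I :: "'n set" where I: "card I = length V"
    using obtain_subset_with_card_n[OF len] by auto
  define s where "s i = sorted_list_of_set I ! i" for i
  define G :: "((real,'n) vec,'n) vec" where
    "G = (\<chi> r. \<Sum>i<length V. if s i = r then V ! i else 0)"
  have G: "G $ s p = V ! p" if "p < length V" for p
  proof -
    have "G $ s p = (\<Sum>i<length V. if i = p then V ! i else 0)"
      unfolding G_def s_def vec_lambda_beta using that I sorted_list_of_set_nth_eq_iff[of I]
      by (intro sum.cong) auto
    then show ?thesis using that by simp
  qed
  have "wedge (map (\<lambda>x. G *v x) V) $ I = minor (length V) (\<lambda>i. G *v (V ! i)) s"
    using I by (simp add: wedge_component) (rule minor_cong; simp add: s_def)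
  also have "\<dots> = 1"
  proof (rule minor_eq_1)
    fix i p assume "i < length V" "p < length V"
    then show "(G *v (V ! i)) $ s p = (if i = p then 1 else 0)"
      using G orth[of p i] by (simp add: matrix_vector_mult_def inner_vec_def)
  qed
  finally have "compound (length V) G (wedge V) $ I = 1"
    by (simp add: compound_wedge)
  moreover have "compound (length V) G (wedge V) $ I = 0"
    using compound_wedge_rows_component[OF I, of G] G \<open>wedge V = 0\<close> unfolding s_def by simp
  ultimately show False by simp
qed

lemma bounded_lists_convergent_subsequence:
  fixes f :: "nat \<Rightarrow> 'a::{heine_borel,real_normed_vector} list"
  assumes "\<And>m. length (f m) = k" "\<And>m i. i < k \<Longrightarrow> norm (f m ! i) \<le> B"
  obtains \<sigma> ys where "strict_mono \<sigma>" "length ys = k" "\<And>i. i < k \<Longrightarrow> (\<lambda>m. f (\<sigma> m) ! i) \<longlonglongrightarrow> ys ! i"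
  using assms
proof (induction k arbitrary: f thesis)
  case 0
  then show ?case using strict_mono_id by fastforce
next
  case (Suc k)
  have f: "f m ! 0 = hd (f m)" "f m ! Suc i = tl (f m) ! i" "length (tl (f m)) = k" for m i
    using Suc.prems(2)[of m] by (cases "f m"; simp)+
  have "norm (tl (f m) ! i) \<le> B" if "i < k" for m i
    using Suc.prems(3)[of "Suc i" m] that by (simp add: f)
  then obtain \<sigma>1 ys where \<sigma>1: "strict_mono \<sigma>1" "length ys = k"
    "\<And>i. i < k \<Longrightarrow> (\<lambda>m. tl (f (\<sigma>1 m)) ! i) \<longlonglongrightarrow> ys ! i"
    using Suc.IH[of "\<lambda>m. tl (f m)"] f(3) by blast
  have "norm (hd (f m)) \<le> B" for m
    using Suc.prems(3)[of 0 m] by (simp add: f)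
  then have "bounded (range (\<lambda>m. hd (f (\<sigma>1 m))))" unfolding bounded_iff by blast
  then obtain y \<sigma>2 where \<sigma>2: "strict_mono \<sigma>2" "(\<lambda>m. hd (f (\<sigma>1 (\<sigma>2 m)))) \<longlonglongrightarrow> y"
    using bounded_imp_convergent_subsequence unfolding o_def by blast
  have "(\<lambda>m. f (\<sigma>1 (\<sigma>2 m)) ! i) \<longlonglongrightarrow> (y # ys) ! i" if "i < Suc k" for i
  proof (cases i)
    case 0
    then show ?thesis using \<sigma>2(2) by (simp add: f)
  next
    case (Suc i')
    then have "(\<lambda>m. tl (f (\<sigma>1 (\<sigma>2 m))) ! i') \<longlonglongrightarrow> ys ! i'"
      using LIMSEQ_subseq_LIMSEQ[OF \<sigma>1(3) \<sigma>2(1)] that by (simp add: o_def)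
    then show ?thesis using Suc by (simp add: f)
  qed
  then show ?case
    using Suc.prems(1)[of "\<sigma>1 \<circ> \<sigma>2" "y # ys"] strict_mono_o[OF \<sigma>1(1) \<sigma>2(1)] \<sigma>1(2)
    by (simp add: o_def)
qed

lemma wedge_orthonormal_perp_nonzero:
  fixes x :: "real^'n::{finite,linorder}"
  assumes x: "x \<noteq> 0" and ys: "orthonormal_perp x ys" and len: "length ys < CARD('n)"
  shows "wedge (x # ys) \<noteq> 0"
proof -
  define V where "V = ((1 / norm x) *\<^sub>R x) # ys"
  have "wedge V \<noteq> 0"
  proof (rule wedge_orthonormal_nonzero)
    show "length V \<le> CARD('n)" using len by (simp add: V_def)
    have "inner (ys ! i) x = 0" "inner (ys ! i) (ys ! k) = (if i = k then 1 else 0)"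
      if "i < length ys" "k < length ys" for i k
      using ys that unfolding orthonormal_perp_def by auto
    moreover have "inner x x = norm x * norm x"
      by (simp add: power2_norm_eq_inner[symmetric] power2_eq_square)
    ultimately show "inner (V ! i) (V ! k) = (if i = k then 1 else 0)"
      if "i < length V" "k < length V" for i k
      using that x by (cases i; cases k) (auto simp: V_def inner_commute)
  qed
  moreover have "wedge (x # ys) = norm x *\<^sub>R wedge V"
    using wedge_update_scaleR[of 0 V "norm x"] x by (simp add: V_def)
  ultimately show ?thesis using x by simp
qed

lemma orthonormal_perp_tendsto:
  assumes x: "xs \<longlonglongrightarrow> x" and len: "\<And>m. length (ys m) = length yl"
    and ys: "\<And>i. i < length yl \<Longrightarrow> (\<lambda>m. ys m ! i) \<longlonglongrightarrow> yl ! i"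
    and perp: "\<And>m. orthonormal_perp (xs m) (ys m)"
  shows "orthonormal_perp x yl"
  unfolding orthonormal_perp_def
proof (intro conjI ballI allI impI)
  fix y assume "y \<in> set yl"
  then obtain i where i: "i < length yl" "y = yl ! i" by (auto simp: in_set_conv_nth)
  have "(\<lambda>m. inner (ys m ! i) (xs m)) \<longlonglongrightarrow> inner y x"
    unfolding i(2) by (intro tendsto_inner ys[OF i(1)] x)
  moreover have "inner (ys m ! i) (xs m) = 0" for m
    using perp[of m] len[of m] i(1) unfolding orthonormal_perp_def by simp
  ultimately show "inner y x = 0" by (simp add: LIMSEQ_const_iff)
next
  fix i k assume ik: "i < length yl" "k < length yl"
  have "(\<lambda>m. inner (ys m ! i) (ys m ! k)) \<longlonglongrightarrow> inner (yl ! i) (yl ! k)"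
    using ik by (intro tendsto_inner ys)
  moreover have "inner (ys m ! i) (ys m ! k) = (if i = k then 1 else 0)" for m
    using perp[of m] len[of m] ik unfolding orthonormal_perp_def by simp
  ultimately show "inner (yl ! i) (yl ! k) = (if i = k then 1 else 0)"
    by (simp add: LIMSEQ_const_iff)
qed

section \<open>The sets T(K_j)\<close>

lemma ext_interior_eq_interior_in: "ext_interior j S = interior_in (ext_space j) S"
  unfolding ext_interior_def interior_in_def ..

locale GSSR_level =
  fixes A :: "((real,'n::{finite,linorder}) vec, 'n) vec" and K :: "nat \<Rightarrow> (real^('n set)) set"
    and \<epsilon> :: real and j :: nat
  assumes K_proper: "proper_cone j (K j)" and \<epsilon>: "\<epsilon> \<in> {1, -1}"
    and compound_positive: "K_positive j (K j) (\<lambda>v. \<epsilon> *\<^sub>R compound j A v)"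
    and j: "1 \<le> j" "j \<le> CARD('n)"
begin

definition M :: "real^('n set) \<Rightarrow> real^('n set)" where
  "M v = \<epsilon> *\<^sub>R compound j A v"

sublocale cone_positive_map "ext_space j" "K j" M
proof (intro cone_positive_map.intro proper_cone_in.intro cone_positive_map_axioms.intro)
  show "linear M"
    unfolding M_def[abs_def] using linear_compound by (rule linear_compose_scale_right)
  show "M ` ext_space j \<subseteq> ext_space j"
    unfolding M_def using compound_in_ext_space subspace_ext_space subspace_scale by blast
  show "M ` (K j - {0}) \<subseteq> interior_in (ext_space j) (K j)"
    using compound_positive
    unfolding K_positive_def M_def[abs_def] ext_interior_eq_interior_in by simp
qed (use K_proper ext_space_nontrivial[OF j(2)] subspace_ext_space
  in \<open>auto simp: proper_cone_def ext_interior_eq_interior_in\<close>)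

lemma M_pow_wedge:
  assumes "length xs = j"
  shows "(M ^^ m) (wedge xs) = \<epsilon> ^ m *\<^sub>R wedge (map ((\<lambda>x. A *v x) ^^ m) xs)"
proof (induction m)
  case (Suc m)
  have "(M ^^ Suc m) (wedge xs) = \<epsilon> ^ m *\<^sub>R M (wedge (map ((\<lambda>x. A *v x) ^^ m) xs))"
    using Suc linear_cmul[OF M_linear] by simp
  also have "M (wedge (map ((\<lambda>x. A *v x) ^^ m) xs)) = \<epsilon> *\<^sub>R wedge (map ((\<lambda>x. A *v x) ^^ Suc m) xs)"
    unfolding M_def using compound_wedge[of "map ((\<lambda>x. A *v x) ^^ m) xs" A] assms by simp
  finally show ?case by (simp add: mult.commute del: funpow.simps)
qed simp

definition T_core :: "(real,'n) vec set" where
  "T_core = {x. \<exists>xs. length xs = j - 1 \<and> wedge (x # xs) \<in> signed_interior_in (ext_space j) (K j)}"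

lemma T_core_open: "open T_core"
  unfolding open_dist
proof (intro ballI)
  fix x assume "x \<in> T_core"
  then obtain xs where xs: "length xs = j - 1"
    "wedge (x # xs) \<in> signed_interior_in (ext_space j) (K j)"
    unfolding T_core_def by blast
  define f where "f y = wedge (y # xs)" for y
  have "bounded_linear f"
    unfolding f_def[abs_def] using linear_wedge_Cons linear_conv_bounded_linear by blast
  then obtain C where C: "C > 0" "\<And>v. norm (f v) \<le> norm v * C"
    using bounded_linear.pos_bounded by blast
  have f_diff: "f y - f x = f (y - x)" for y
    using \<open>bounded_linear f\<close> by (simp add: linear_diff linear_conv_bounded_linear)
  obtain r where r: "r > 0"
    "\<And>y. y \<in> ext_space j \<Longrightarrow> dist y (f x) < r \<Longrightarrow> y \<in> signed_interior_in (ext_space j) (K j)"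
    using signed_interior_in_ball xs(2) unfolding f_def by blast
  have f_ext: "f y \<in> ext_space j" for y
    using wedge_in_ext_space[of "y # xs"] xs(1) j(1) unfolding f_def by simp
  show "\<exists>d>0. \<forall>y. dist y x < d \<longrightarrow> y \<in> T_core"
  proof (intro exI[of _ "r / C"] conjI allI impI)
    show "r / C > 0" using r C by simp
    fix y assume "dist y x < r / C"
    then have "norm (y - x) * C < r" using C by (simp add: dist_norm field_simps)
    then have "dist (f y) (f x) < r" using C(2)[of "y - x"] f_diff by (simp add: dist_norm)
    then show "y \<in> T_core" using r f_ext xs(1) unfolding T_core_def f_def by blast
  qed
qed

lemma A_mem_T_core:
  assumes "length ys = j - 1" "wedge (x # ys) \<in> (K j \<union> uminus ` K j) - {0}"
  shows "A *v x \<in> T_core"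
proof -
  have "M (wedge (x # ys)) = \<epsilon> *\<^sub>R wedge (map (\<lambda>v. A *v v) (x # ys))"
    unfolding M_def using compound_wedge[of "x # ys" A] assms(1) j(1) by simp
  then have "\<epsilon> *\<^sub>R M (wedge (x # ys)) = wedge ((A *v x) # map (\<lambda>v. A *v v) ys)"
    using \<epsilon> by auto
  moreover have "\<epsilon> *\<^sub>R M (wedge (x # ys)) \<in> signed_interior_in (ext_space j) (K j)"
    using M_signed_interior[OF assms(2)] \<epsilon>
    by (intro signed_interior_in_scaleR[OF E_subspace K_cone K_subset]) auto
  ultimately show ?thesis
    using assms(1) unfolding T_core_def by (intro CollectI exI[of _ "map (\<lambda>v. A *v v) ys"]) simp
qed

lemma T_core_nonempty: "T_core \<noteq> {}"
proof -
  define B where "B = (\<lambda>J. axis J (1::real)) ` {J :: 'n set. card J = j}"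
  have "ext_space j \<subseteq> span B"
  proof
    fix v :: "real^('n set)" assume "v \<in> ext_space j"
    then have "v = (\<Sum>J :: 'n set | card J = j. v $ J *\<^sub>R axis J 1)"
      by (rule ext_space_basis_expansion)
    also have "\<dots> \<in> span B"
      unfolding B_def by (intro span_sum span_scale span_base) auto
    finally show "v \<in> span B" .
  qed
  moreover have "B \<subseteq> ext_space j" unfolding B_def using axis_in_ext_space by force
  moreover have "finite B" unfolding B_def by simp
  ultimately obtain w m where "w \<in> B" "(M ^^ m) w \<in> signed_interior_in (ext_space j) (K j)"
    using exists_iterate_in_signed_interior by blast
  then obtain J where J: "card J = j"
    "(M ^^ m) (axis J 1) \<in> signed_interior_in (ext_space j) (K j)"
    unfolding B_def by blast
  define L where "L = map ((\<lambda>x. A *v x) ^^ m) (map (\<lambda>k. axis k 1) (sorted_list_of_set J))"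
  have "length L = j" using J(1) by (simp add: L_def)
  have "(M ^^ m) (axis J 1) = \<epsilon> ^ m *\<^sub>R wedge L"
    using M_pow_wedge[of "map (\<lambda>k. axis k 1) (sorted_list_of_set J)" m] wedge_axis_sorted[of J] J(1)
    by (simp add: L_def)
  moreover have "\<epsilon> ^ m * \<epsilon> ^ m = 1" using \<epsilon> by (auto simp: power_mult_distrib[symmetric])
  ultimately have "wedge L = \<epsilon> ^ m *\<^sub>R (M ^^ m) (axis J 1)" by simp
  also have "\<dots> \<in> signed_interior_in (ext_space j) (K j)"
    using J(2) \<epsilon> by (intro signed_interior_in_scaleR[OF E_subspace K_cone K_subset]) auto
  finally have "wedge (hd L # tl L) \<in> signed_interior_in (ext_space j) (K j)"
    using \<open>length L = j\<close> j(1) by (cases L) auto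
  then have "hd L \<in> T_core"
    unfolding T_core_def using \<open>length L = j\<close> by force
  then show ?thesis by blast
qed

lemma T_core_orthonormal_witness:
  assumes "x \<in> T_core"
  obtains ys where "length ys = j - 1" "orthonormal_perp x ys"
    "wedge (x # ys) \<in> signed_interior_in (ext_space j) (K j)"
proof -
  obtain zs where zs: "length zs = j - 1" "wedge (x # zs) \<in> signed_interior_in (ext_space j) (K j)"
    using assms unfolding T_core_def by blast
  then have "wedge (x # zs) \<noteq> 0" using zero_notin_signed_interior by auto
  moreover from this have "x \<noteq> 0" by (auto intro: wedge_eq_0_if_zero[of 0])
  ultimately obtain ys c where "length ys = j - 1" "c > 0" "wedge (x # ys) = c *\<^sub>R wedge (x # zs)"
    "orthonormal_perp x ys"
    using gram_schmidt_wedge[of x "[]" zs] orthonormal_perp_Nil zs(1) by auto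
  then show ?thesis
    using that signed_interior_in_scaleR[OF E_subspace K_cone K_subset zs(2)] by simp
qed

text \<open>A limit of points of T_core carries a limit of orthonormal witnesses, whose wedge
  stays in the closed set K_j \<union> -K_j and is nonzero by orthonormality.\<close>

lemma closure_T_core_wedge:
  assumes "x \<in> closure T_core" "x \<noteq> 0"
  obtains ys where "length ys = j - 1" "wedge (x # ys) \<in> (K j \<union> uminus ` K j) - {0}"
proof -
  obtain xs where xs: "\<And>m. xs m \<in> T_core" "xs \<longlonglongrightarrow> x"
    using closure_sequential assms(1) by blast
  have "\<exists>ys. length ys = j - 1 \<and> orthonormal_perp (xs m) ys \<and>
      wedge (xs m # ys) \<in> signed_interior_in (ext_space j) (K j)" for m
    using T_core_orthonormal_witness[OF xs(1)[of m]] by blast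
  then obtain ys where ys: "\<And>m. length (ys m) = j - 1" "\<And>m. orthonormal_perp (xs m) (ys m)"
    "\<And>m. wedge (xs m # ys m) \<in> signed_interior_in (ext_space j) (K j)"
    by metis
  have "norm (ys m ! i) \<le> 1" if "i < j - 1" for m i
    using ys(1,2)[of m] that unfolding orthonormal_perp_def by (simp add: norm_eq_sqrt_inner)
  then obtain \<sigma> yl where \<sigma>: "strict_mono \<sigma>" "length yl = j - 1"
    "\<And>i. i < j - 1 \<Longrightarrow> (\<lambda>m. ys (\<sigma> m) ! i) \<longlonglongrightarrow> yl ! i"
    using bounded_lists_convergent_subsequence[of ys "j - 1" 1] ys(1) by metis
  have x\<sigma>: "(\<lambda>m. xs (\<sigma> m)) \<longlonglongrightarrow> x"
    using LIMSEQ_subseq_LIMSEQ[OF xs(2) \<sigma>(1)] by (simp add: o_def)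
  have "orthonormal_perp x yl"
    using orthonormal_perp_tendsto[OF x\<sigma>, of "\<lambda>m. ys (\<sigma> m)"] ys(1,2) \<sigma>(2,3) by simp
  then have "wedge (x # yl) \<noteq> 0"
    using wedge_orthonormal_perp_nonzero assms(2) \<sigma>(2) j by fastforce
  moreover have "wedge (x # yl) \<in> K j \<union> uminus ` K j"
  proof (rule closed_sequentially)
    show "closed (K j \<union> uminus ` K j)" using K_closed by (intro closed_Un closed_negations)
    show "wedge (xs (\<sigma> m) # ys (\<sigma> m)) \<in> K j \<union> uminus ` K j" for m
      using ys(3) interior_in_subset unfolding signed_interior_in_def by blast
    show "(\<lambda>m. wedge (xs (\<sigma> m) # ys (\<sigma> m))) \<longlonglongrightarrow> wedge (x # yl)"
    proof (rule wedge_tendsto)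
      show "length (xs (\<sigma> m) # ys (\<sigma> m)) = j" "length (x # yl) = j" for m
        using ys(1) \<sigma>(2) j(1) by simp_all
      show "(\<lambda>m. (xs (\<sigma> m) # ys (\<sigma> m)) ! i) \<longlonglongrightarrow> (x # yl) ! i" if "i < j" for i
        using x\<sigma> \<sigma>(3) that by (cases i) simp_all
    qed
  qed
  ultimately show ?thesis using that \<sigma>(2) by blast
qed

lemma T_cone_eq_closure: "2 \<le> j \<Longrightarrow> T_cone K j = closure T_core"
  unfolding T_cone_def T_core_def signed_interior_in_def ext_interior_eq_interior_in by simp

lemma T_core_subset_T_cone: "T_core \<subseteq> T_cone K j"
proof (cases "j = 1")
  case True
  show ?thesis
  proof
    fix x assume "x \<in> T_core"
    then have "wedge [x] \<in> signed_interior_in (ext_space j) (K j)"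
      using True unfolding T_core_def by auto
    then have "wedge [x] \<in> K j \<union> uminus ` K j"
      using interior_in_subset unfolding signed_interior_in_def by blast
    then show "x \<in> T_cone K j" using True unfolding T_cone_def by simp
  qed
next
  case False
  then show ?thesis using T_cone_eq_closure j(1) closure_subset by simp
qed

lemma A_T_cone_subset_T_core:
  assumes "x \<in> T_cone K j" "x \<noteq> 0"
  shows "A *v x \<in> T_core"
proof (cases "j = 1")
  case True
  then have "wedge [x] \<in> (K j \<union> uminus ` K j) - {0}"
    using assms wedge_singleton_nonzero unfolding T_cone_def by simp
  then show ?thesis using A_mem_T_core[of "[]"] True by simp
next
  case False
  then have "x \<in> closure T_core" using assms(1) T_cone_eq_closure j(1) by simp
  then obtain ys where "length ys = j - 1" "wedge (x # ys) \<in> (K j \<union> uminus ` K j) - {0}"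
    using closure_T_core_wedge assms(2) by blast
  then show ?thesis by (rule A_mem_T_core)
qed

end

theorem theorem25:
  fixes A :: "((real,'n::{finite,linorder}) vec, 'n) vec"
    and K :: "nat \<Rightarrow> ((real,'n set) vec) set"
  assumes "totally_positive_structure K"
    and "GSSR A K"
  shows "\<forall>j\<in>{1..CARD('n)}. interior (T_cone K j) \<noteq> {} \<and>
           (\<lambda>x. A *v x) ` (T_cone K j - {0}) \<subseteq> interior (T_cone K j)"
proof
  fix j assume j: "j \<in> {1..CARD('n)}"
  obtain \<epsilon> where "\<epsilon> j \<in> {1, -1}" "K_positive j (K j) (\<lambda>v. \<epsilon> j *\<^sub>R compound j A v)"
    using assms(2) j unfolding GSSR_def by blast
  then interpret GSSR_level A K "\<epsilon> j" j
    using assms(1) j unfolding totally_positive_structure_def by unfold_locales auto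
  have "T_core \<subseteq> interior (T_cone K j)"
    using interior_maximal[OF T_core_subset_T_cone T_core_open] .
  then show "interior (T_cone K j) \<noteq> {} \<and>
      (\<lambda>x. A *v x) ` (T_cone K j - {0}) \<subseteq> interior (T_cone K j)"
    using T_core_nonempty A_T_cone_subset_T_core by blast
qed

end
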